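(* Let $X\subseteq Y\subseteq Z$ be FK-spaces containing $\phi$. (i) If $Y$ is deferred Ces\`{a}ro conull with respect to $X$, then $Z$ is deferred Ces\`{a}ro conull with respect to $X$. (ii) If $Z$ is deferred Ces\`{a}ro conull with respect to $X$ and $Y$ is closed in $Z$, then $Y$ is deferred Ces\`{a}ro conull with respect to $X$.
   Context: An FK-space is a vector subspace of the space $w$ of all complex sequences with a complete metrizable locally convex topology in which all coordinate functionals are continuous; $X'$ is the continuous dual. $\delta^j$ is the sequence with $1$ in position $j$, $0$ elsewhere; $\phi=\operatorname{span}\{\delta^j\}$. Fix nonnegative integer sequences $p(n)<q(n)$ with $q(n)\to\infty$. For $x\in w$ let $x^{(k)}=\sum_{j=1}^k x_j\delta^j$ and $T_n(x)=\frac{1}{q(n)-p(n)}\sum_{k=p(n)+1}^{q(n)}x^{(k)}$. For an FK-space $X\supseteq\phi$: $D_p^qW(X)=\{x\in X : f(T_n(x))\to f(x) \text{ for all } f\in X'\}$; $D_p^qB(X)=\{x\in X : \sup_n|f(T_n(x))|<\infty \text{ for all } f\in X'\}$. For FK-spaces $X\subseteq Y$ with $D_p^qW(X)\neq D_p^qB(X)$, $Y$ is called deferred Ces\`{a}ro conull with respect to $X$ if $D_p^qB(X)\subseteq D_p^qW(Y)$. *)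

theory Defs
  imports "HOL-Analysis.Analysis"
begin

type_synonym cseq = "nat \<Rightarrow> complex"

text \<open>Sequences are indexed from 0; position j of the paper is index j-1 here.\<close>

definition delta :: "nat \<Rightarrow> cseq" where
  "delta j = (\<lambda>i. if i = j then 1 else 0)"

text \<open>phi = span of the unit sequences = finitely supported sequences.\<close>
definition phi :: "cseq set" where
  "phi = {x. finite {j. x j \<noteq> 0}}"

definition sadd :: "cseq \<Rightarrow> cseq \<Rightarrow> cseq" where
  "sadd x y = (\<lambda>j. x j + y j)"

definition szero :: cseq where
  "szero = (\<lambda>j. 0)"

definition smul :: "complex \<Rightarrow> cseq \<Rightarrow> cseq" where
  "smul c x = (\<lambda>j. c * x j)"

definition locally_convex_at0 :: "cseq topology \<Rightarrow> bool" where
  "locally_convex_at0 T \<longleftrightarrow>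
     (\<forall>U. openin T U \<and> szero \<in> U \<longrightarrow>
        (\<exists>V. openin T V \<and> szero \<in> V \<and> V \<subseteq> U \<and>
             (\<forall>x\<in>V. \<forall>y\<in>V. \<forall>t::real. 0 \<le> t \<and> t \<le> 1 \<longrightarrow>
                 (\<lambda>j. of_real t * x j + of_real (1 - t) * y j) \<in> V)))"

definition FK_space :: "cseq set \<Rightarrow> cseq topology \<Rightarrow> bool" where
  "FK_space X T \<longleftrightarrow>
     szero \<in> X \<and> (\<forall>x\<in>X. \<forall>y\<in>X. sadd x y \<in> X) \<and> (\<forall>c. \<forall>x\<in>X. smul c x \<in> X) \<and>
     topspace T = X \<and>
     continuous_map (prod_topology T T) T (\<lambda>(x, y). sadd x y) \<and>
     continuous_map (prod_topology (euclidean :: complex topology) T) T (\<lambda>(c, x). smul c x) \<and>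
     completely_metrizable_space T \<and>
     locally_convex_at0 T \<and>
     (\<forall>j. continuous_map T (euclidean :: complex topology) (\<lambda>x. x j))"

definition FK_dual :: "cseq set \<Rightarrow> cseq topology \<Rightarrow> (cseq \<Rightarrow> complex) set" where
  "FK_dual X T = {f. (\<forall>x\<in>X. \<forall>y\<in>X. f (sadd x y) = f x + f y) \<and>
                     (\<forall>c. \<forall>x\<in>X. f (smul c x) = c * f x) \<and>
                     continuous_map T euclidean f}"

definition sect :: "nat \<Rightarrow> cseq \<Rightarrow> cseq" where
  "sect k x = (\<lambda>j. if j < k then x j else 0)"

definition Tdc :: "(nat \<Rightarrow> nat) \<Rightarrow> (nat \<Rightarrow> nat) \<Rightarrow> nat \<Rightarrow> cseq \<Rightarrow> cseq" where
  "Tdc p q n x = (\<lambda>j. (1 / of_nat (q n - p n)) * (\<Sum>k\<in>{p n + 1..q n}. sect k x j))"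

definition DW :: "(nat \<Rightarrow> nat) \<Rightarrow> (nat \<Rightarrow> nat) \<Rightarrow> cseq set \<Rightarrow> cseq topology \<Rightarrow> cseq set" where
  "DW p q X T = {x \<in> X. \<forall>f \<in> FK_dual X T. (\<lambda>n. f (Tdc p q n x)) \<longlonglongrightarrow> f x}"

definition DB :: "(nat \<Rightarrow> nat) \<Rightarrow> (nat \<Rightarrow> nat) \<Rightarrow> cseq set \<Rightarrow> cseq topology \<Rightarrow> cseq set" where
  "DB p q X T = {x \<in> X. \<forall>f \<in> FK_dual X T. (\<exists>M. \<forall>n. norm (f (Tdc p q n x)) \<le> M)}"

definition dc_conull ::
  "(nat \<Rightarrow> nat) \<Rightarrow> (nat \<Rightarrow> nat) \<Rightarrow> cseq set \<Rightarrow> cseq topology \<Rightarrow> cseq set \<Rightarrow> cseq topology \<Rightarrow> bool" where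
  "dc_conull p q X TX Y TY \<longleftrightarrow>
     X \<subseteq> Y \<and> DW p q X TX \<noteq> DB p q X TX \<and> DB p q X TX \<subseteq> DW p q Y TY"

end

theory Submission
  imports Defs "HOL-Library.Function_Algebras"
begin

(* Both parts rest on two classical facts about FK-spaces Y \<subseteq> Z.

   (i) The inclusion Y \<rightarrow> Z is continuous.  The topology on Y generated by those of Y and Z
   is again a completely metrizable vector topology (its graph is closed because both topologies
   are finer than coordinatewise convergence), and two comparable completely metrizable vector
   topologies coincide by the open mapping argument (Baire category, plus Klee's theorem that such
   a topology is complete for its translation-invariant uniformity).  So every f \<in> Z' restricts to
   Y', whence DW(Y) \<subseteq> DW(Z).

   (ii) If Y is closed in Z, the relative topology of Z on Y is completely metrizable and coarser
   than that of Y, hence equal to it, and by Hahn-Banach (with the Minkowski functional of a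
   convex neighbourhood of 0) every f \<in> Y' extends to some g \<in> Z'.  As T_n x \<in> \<phi> \<subseteq> Y, g and f
   agree on the means, so DW(Z) \<inter> Y \<subseteq> DW(Y). *)

section \<open>Vector topologies on subspaces of a real vector space\<close>

(* Function_Algebras only provides the pointwise additive structure. *)

instantiation "fun" :: (type, real_vector) real_vector
begin

definition scaleR_fun :: "real \<Rightarrow> ('a \<Rightarrow> 'b) \<Rightarrow> 'a \<Rightarrow> 'b" where
  "scaleR_fun r f = (\<lambda>x. r *\<^sub>R f x)"

instance by standard (simp_all add: scaleR_fun_def fun_eq_iff algebra_simps)

end

lemma scaleR_fun_apply [simp]: "(r *\<^sub>R f) x = r *\<^sub>R f x"
  by (simp add: scaleR_fun_def)

lemma sadd_eq_plus [simp]: "sadd x y = x + y"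
  by (simp add: sadd_def fun_eq_iff)

lemma szero_eq_zero [simp]: "szero = 0"
  by (simp add: szero_def fun_eq_iff)

lemma smul_apply [simp]: "smul c x j = c * x j"
  by (simp add: smul_def)

lemma smul_of_real [simp]: "smul (of_real r) x = r *\<^sub>R x"
  by (simp add: fun_eq_iff scaleR_conv_of_real)

locale tvs =
  fixes S :: "'a::real_vector set" and T :: "'a topology"
  assumes subspace: "subspace S"
    and topspace: "topspace T = S"
    and continuous_add: "continuous_map (prod_topology T T) T (\<lambda>(x, y). x + y)"
    and continuous_scaleR: "continuous_map (prod_topology euclideanreal T) T (\<lambda>(r, x). r *\<^sub>R x)"
begin

lemma zero_mem [simp]: "0 \<in> S"
  using subspace by (rule subspace_0)

lemma add_mem: "x \<in> S \<Longrightarrow> y \<in> S \<Longrightarrow> x + y \<in> S"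
  using subspace by (rule subspace_add)

lemma diff_mem: "x \<in> S \<Longrightarrow> y \<in> S \<Longrightarrow> x - y \<in> S"
  using subspace by (rule subspace_diff)

lemma scaleR_mem: "x \<in> S \<Longrightarrow> r *\<^sub>R x \<in> S"
  using subspace by (rule subspace_scale)

lemma openin_subset_carrier: "openin T U \<Longrightarrow> U \<subseteq> S"
  using openin_subset topspace by blast

lemma continuous_map_add:
  assumes "continuous_map X T f" "continuous_map X T g"
  shows "continuous_map X T (\<lambda>z. f z + g z)"
  using continuous_map_compose[OF continuous_map_pairedI[OF assms] continuous_add]
  by (simp add: o_def)

lemma continuous_map_scaleR:
  assumes "continuous_map X euclideanreal f" "continuous_map X T g"
  shows "continuous_map X T (\<lambda>z. f z *\<^sub>R g z)"
  using continuous_map_compose[OF continuous_map_pairedI[OF assms] continuous_scaleR]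
  by (simp add: o_def)

lemma continuous_map_diff:
  assumes "continuous_map X T f" "continuous_map X T g"
  shows "continuous_map X T (\<lambda>z. f z - g z)"
proof -
  have "continuous_map X T (\<lambda>z. f z + (- 1) *\<^sub>R g z)"
    by (intro continuous_map_add continuous_map_scaleR assms) simp
  then show ?thesis by simp
qed

lemma continuous_map_translation: "a \<in> S \<Longrightarrow> continuous_map T T (\<lambda>x. x + a)"
  by (intro continuous_map_add) (auto simp: topspace)

lemma openin_preimage:
  assumes "continuous_map T T f" "openin T U"
  shows "openin T {x \<in> S. f x \<in> U}"
  using openin_continuous_map_preimage[OF assms] topspace by simp

lemma openin_translation: "a \<in> S \<Longrightarrow> openin T U \<Longrightarrow> openin T {x \<in> S. x + a \<in> U}"
  by (rule openin_preimage[OF continuous_map_translation])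

lemma zero_nbhd_of_binop:
  assumes "continuous_map (prod_topology T T) T (\<lambda>(x, y). h x y)"
    and "openin T U" "h 0 0 \<in> U"
  shows "\<exists>P. openin T P \<and> 0 \<in> P \<and> (\<forall>a\<in>P. \<forall>b\<in>P. h a b \<in> U)"
proof -
  let ?H = "{z \<in> topspace (prod_topology T T). (\<lambda>(x, y). h x y) z \<in> U}"
  have H: "openin (prod_topology T T) ?H"
    using openin_continuous_map_preimage[OF assms(1,2)] .
  have H0: "(0, 0) \<in> ?H"
    using assms(3) topspace by simp
  obtain A B where AB: "openin T A" "openin T B" "0 \<in> A" "0 \<in> B" "A \<times> B \<subseteq> ?H"
    using H[unfolded openin_prod_topology_alt, rule_format, OF H0] by blast
  have "h a b \<in> U" if "a \<in> A \<inter> B" "b \<in> A \<inter> B" for a b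
  proof -
    have "(a, b) \<in> ?H" using that AB(5) by blast
    then show ?thesis by simp
  qed
  moreover have "openin T (A \<inter> B)" "0 \<in> A \<inter> B"
    using AB by (simp_all add: openin_Int)
  ultimately show ?thesis by blast
qed

lemma zero_nbhd_add:
  "openin T U \<Longrightarrow> 0 \<in> U \<Longrightarrow> \<exists>P. openin T P \<and> 0 \<in> P \<and> (\<forall>a\<in>P. \<forall>b\<in>P. a + b \<in> U)"
  using zero_nbhd_of_binop[OF continuous_add] by simp

lemma zero_nbhd_diff:
  assumes "openin T U" "0 \<in> U"
  shows "\<exists>P. openin T P \<and> 0 \<in> P \<and> (\<forall>a\<in>P. \<forall>b\<in>P. a - b \<in> U)"
proof (rule zero_nbhd_of_binop)
  have "continuous_map (prod_topology T T) T (\<lambda>z. fst z - snd z)"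
    by (intro continuous_map_diff continuous_map_fst continuous_map_snd)
  then show "continuous_map (prod_topology T T) T (\<lambda>(x, y). x - y)"
    by (simp add: case_prod_unfold)
qed (use assms in simp_all)

lemma absorbing:
  assumes "x \<in> S" "openin T U" "0 \<in> U"
  shows "\<exists>r>0. \<forall>c. \<bar>c\<bar> < r \<longrightarrow> c *\<^sub>R x \<in> U"
proof -
  have "continuous_map euclideanreal T (\<lambda>c. c *\<^sub>R x)"
    by (intro continuous_map_scaleR) (auto simp: topspace assms(1))
  from openin_continuous_map_preimage[OF this assms(2)]
  have "open {c. c *\<^sub>R x \<in> U}" by simp
  moreover have "0 \<in> {c. c *\<^sub>R x \<in> U}" using assms(3) by simp
  ultimately obtain r where "r > 0" "ball 0 r \<subseteq> {c. c *\<^sub>R x \<in> U}"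
    by (meson open_contains_ball)
  then show ?thesis
    by (intro exI[of _ r]) (force simp: subset_iff dist_real_def)
qed

lemma absorbing_inverse:
  assumes "openin T V" "0 \<in> V" "x \<in> S"
  shows "\<exists>t>0. inverse t *\<^sub>R x \<in> V"
proof -
  obtain r where r: "r > 0" "\<forall>c. \<bar>c\<bar> < r \<longrightarrow> c *\<^sub>R x \<in> V"
    using absorbing[OF assms(3,1,2)] by blast
  then have "inverse (2 / r) *\<^sub>R x \<in> V"
    by simp
  then show ?thesis
    using r(1) by (intro exI[of _ "2 / r"]) simp
qed

lemma diff_in_closure_of:
  assumes "u \<in> T closure_of W" "v \<in> T closure_of W" "\<And>a b. a \<in> W \<Longrightarrow> b \<in> W \<Longrightarrow> a - b \<in> V"
  shows "u - v \<in> T closure_of V"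
proof -
  have cont: "continuous_map (prod_topology T T) T (\<lambda>z. fst z - snd z)"
    by (intro continuous_map_diff continuous_map_fst continuous_map_snd)
  have "(u, v) \<in> prod_topology T T closure_of (W \<times> W)"
    using assms(1,2) by (simp add: closure_of_Times)
  then have "u - v \<in> T closure_of ((\<lambda>z. fst z - snd z) ` (W \<times> W))"
    using continuous_map_image_closure_subset[OF cont] by fastforce
  moreover have "(\<lambda>z. fst z - snd z) ` (W \<times> W) \<subseteq> V" using assms(3) by auto
  ultimately show ?thesis using closure_of_mono by fastforce
qed

definition tvs_Cauchy :: "(nat \<Rightarrow> 'a) \<Rightarrow> bool" where
  "tvs_Cauchy x \<longleftrightarrow> (\<forall>n. x n \<in> S) \<and>
     (\<forall>W. openin T W \<and> 0 \<in> W \<longrightarrow> (\<exists>N. \<forall>m\<ge>N. \<forall>n\<ge>N. x m - x n \<in> W))"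

lemma tvs_CauchyD:
  assumes "tvs_Cauchy x" "openin T W" "0 \<in> W"
  shows "\<exists>N. \<forall>m\<ge>N. \<forall>n\<ge>N. x m - x n \<in> W"
  using assms unfolding tvs_Cauchy_def by simp

(* Klee's argument: for a complete metric d of T, not necessarily translation invariant,
   the points z along which z + x n is d-Cauchy up to \<epsilon> form a set with dense interior. *)
lemma Klee_dense:
  assumes "Metric_space S d" and T_eq: "T = Metric_space.mtopology S d"
    and x: "tvs_Cauchy x" and "\<epsilon> > 0"
  shows "T closure_of (T interior_of {z \<in> S. \<exists>N. \<forall>m\<ge>N. \<forall>n\<ge>N. d (z + x m) (z + x n) < \<epsilon>}) = S"
    (is "_ closure_of (_ interior_of ?A) = _")
proof -
  interpret Metric_space S d by fact
  have xS: "x n \<in> S" for n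
    using x by (simp add: tvs_Cauchy_def)
  have "\<exists>z. z \<in> T interior_of ?A \<and> z \<in> U0" if U0: "openin T U0" "z0 \<in> U0" for z0 U0
  proof -
    have z0: "z0 \<in> S" using U0 openin_subset_carrier by blast
    have "openin T {w \<in> S. w + z0 \<in> U0}"
      using openin_translation[OF z0 U0(1)] .
    moreover have "0 \<in> {w \<in> S. w + z0 \<in> U0}"
      using U0(2) by simp
    ultimately have "\<exists>N. \<forall>m\<ge>N. \<forall>n\<ge>N. x m - x n \<in> {w \<in> S. w + z0 \<in> U0}"
      by (rule tvs_CauchyD[OF x])
    then obtain N0 where N0: "\<forall>m\<ge>N0. \<forall>n\<ge>N0. x m - x n + z0 \<in> U0"
      by auto
    define q where "q = z0 + x N0"
    have q: "q \<in> S" using add_mem[OF z0 xS] by (simp add: q_def)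
    have "openin T {w \<in> S. w + q \<in> mball q (\<epsilon>/2)}"
      using openin_translation[OF q, of "mball q (\<epsilon>/2)"] by (simp add: T_eq)
    moreover have "0 \<in> {w \<in> S. w + q \<in> mball q (\<epsilon>/2)}"
      using q \<open>\<epsilon> > 0\<close> by simp
    ultimately obtain P where P: "openin T P" "0 \<in> P"
      and PP: "\<forall>a\<in>P. \<forall>b\<in>P. a + b \<in> {w \<in> S. w + q \<in> mball q (\<epsilon>/2)}"
      using zero_nbhd_add by blast
    obtain N1' where "\<forall>m\<ge>N1'. \<forall>n\<ge>N1'. x m - x n \<in> P"
      using tvs_CauchyD[OF x P(1,2)] by blast
    then obtain N1 where N1: "N1 \<ge> N0" "\<And>m n. m \<ge> N1 \<Longrightarrow> n \<ge> N1 \<Longrightarrow> x m - x n \<in> P"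
      by (metis max.cobounded1 max.cobounded2 order_trans)
    define z where "z = z0 + (x N0 - x N1)"
    define Q where "Q = U0 \<inter> {z' \<in> S. z' + - z \<in> P}"
    have zS: "z \<in> S" unfolding z_def by (intro add_mem diff_mem z0 xS)
    have "openin T Q"
      unfolding Q_def by (intro openin_Int U0(1) openin_translation P(1) scaleR_mem[of z "- 1", simplified] zS)
    moreover have "z \<in> Q"
      using N0 N1(1) zS P(2) by (simp add: Q_def z_def add.commute)
    moreover have "Q \<subseteq> ?A"
    proof
      fix z' assume z': "z' \<in> Q"
      then have z'S: "z' \<in> S" and z'P: "z' - z \<in> P" by (auto simp: Q_def)
      have near: "d q (z' + x m) < \<epsilon>/2" if "m \<ge> N1" for m
      proof -
        have "d q ((z' - z) + (x m - x N1) + q) < \<epsilon>/2"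
          using PP z'P N1(2)[OF that order_refl] by simp
        then show ?thesis by (simp add: z_def q_def algebra_simps)
      qed
      have "d (z' + x m) (z' + x n) < \<epsilon>" if "m \<ge> N1" "n \<ge> N1" for m n
      proof -
        have "z' + x m \<in> S" "z' + x n \<in> S" using add_mem[OF z'S xS] by auto
        then have "d (z' + x m) (z' + x n) \<le> d q (z' + x m) + d q (z' + x n)"
          using q by (metis commute triangle)
        then show ?thesis using near[OF that(1)] near[OF that(2)] by linarith
      qed
      then show "z' \<in> ?A" using z'S by blast
    qed
    ultimately show ?thesis
      using interior_of_maximal[of Q ?A T] by (auto simp: Q_def)
  qed
  then show ?thesis
    by (auto simp: in_closure_of topspace closure_of_subset_topspace[of T, unfolded topspace])
qed

theorem tvs_Cauchy_convergent:
  assumes cm: "completely_metrizable_space T" and x: "tvs_Cauchy x"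
  shows "\<exists>l. limitin T x l sequentially"
proof -
  obtain M d where md: "Metric_space M d" "Metric_space.mcomplete M d" "T = Metric_space.mtopology M d"
    using cm unfolding completely_metrizable_space_def by blast
  have "M = S"
    using Metric_space.topspace_mtopology[OF md(1)] md(3) topspace by simp
  with md have ms: "Metric_space S d" "Metric_space.mcomplete S d" "T = Metric_space.mtopology S d"
    by simp_all
  interpret Metric_space S d by (fact ms)
  define A where "A k = {z \<in> S. \<exists>N. \<forall>m\<ge>N. \<forall>n\<ge>N. d (z + x m) (z + x n) < 1 / Suc k}" for k
  have "T closure_of \<Inter>(range (\<lambda>k. T interior_of A k)) = topspace T"
  proof (rule Baire_category)
    show "completely_metrizable_space T \<or> locally_compact_space T \<and> regular_space T"
      using cm by blast
    show "countable (range (\<lambda>k. T interior_of A k))"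
      by simp
    fix U assume "U \<in> range (\<lambda>k. T interior_of A k)"
    then obtain k where "U = T interior_of A k"
      by blast
    then show "openin T U \<and> T closure_of U = topspace T"
      using Klee_dense[OF ms(1,3) x, of "1 / Suc k"] by (simp add: A_def topspace)
  qed
  then have "(\<Inter>k. T interior_of A k) \<noteq> {}"
    using topspace zero_mem closure_of_empty by (metis empty_iff)
  then obtain z where "z \<in> (\<Inter>k. T interior_of A k)"
    by blast
  then have z: "z \<in> A k" for k
    using interior_of_subset[of T "A k"] by blast
  have zS: "z \<in> S"
    using z[of 0] by (simp add: A_def)
  have xS: "x n \<in> S" for n
    using x by (simp add: tvs_Cauchy_def)
  have "MCauchy (\<lambda>n. z + x n)"
    unfolding MCauchy_def
  proof (intro conjI allI impI)
    show "range (\<lambda>n. z + x n) \<subseteq> S"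
      by (simp add: image_subset_iff add_mem zS xS)
    fix e :: real assume "e > 0"
    then obtain k where k: "inverse (real (Suc k)) < e"
      using reals_Archimedean by blast
    obtain N where "\<And>m n. m \<ge> N \<Longrightarrow> n \<ge> N \<Longrightarrow> d (z + x m) (z + x n) < 1 / Suc k"
      using z[of k] unfolding A_def by blast
    then show "\<exists>N. \<forall>n n'. N \<le> n \<longrightarrow> N \<le> n' \<longrightarrow> d (z + x n) (z + x n') < e"
      using k by (metis inverse_eq_divide order.strict_trans)
  qed
  then obtain w where "limitin T (\<lambda>n. z + x n) w sequentially"
    using ms(2,3) unfolding mcomplete_def by blast
  from continuous_map_limit[OF continuous_map_translation[OF scaleR_mem[OF zS, of "- 1"]] this]
  show ?thesis
    by (auto simp: o_def)
qed

end

section \<open>Comparable complete vector topologies coincide\<close>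

lemma (in tvs) interior_of_closure_of_absorbing:
  assumes cm: "completely_metrizable_space T" and W: "W \<subseteq> S"
    and absorb: "\<And>x. x \<in> S \<Longrightarrow> \<exists>n. inverse (real (Suc n)) *\<^sub>R x \<in> W"
  shows "T interior_of (T closure_of W) \<noteq> {}"
proof -
  define F where "F n = {x \<in> topspace T. inverse (real (Suc n)) *\<^sub>R x \<in> T closure_of W}" for n
  have "continuous_map T T (\<lambda>x. inverse (real (Suc n)) *\<^sub>R x)" for n
    by (intro continuous_map_scaleR continuous_map_id[unfolded id_def]) simp
  then have "closedin T (F n)" for n
    unfolding F_def by (rule closedin_continuous_map_preimage) simp
  moreover have "\<Union>(range F) = topspace T"
  proof -
    have "x \<in> \<Union>(range F)" if x: "x \<in> S" for x
    proof -
      obtain n where "inverse (real (Suc n)) *\<^sub>R x \<in> W"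
        using absorb[OF x] by blast
      then have "x \<in> F n"
        using x W closure_of_subset[of W T] by (auto simp: F_def topspace)
      then show ?thesis by blast
    qed
    then show ?thesis by (auto simp: F_def topspace)
  qed
  moreover have "T interior_of topspace T \<noteq> {}"
    using topspace zero_mem interior_of_topspace by (metis empty_iff)
  ultimately obtain n where "T interior_of F n \<noteq> {}"
    using Baire_category_alt[of T "range F"] cm by auto
  then obtain a U0 where U0: "openin T U0" "a \<in> U0" "U0 \<subseteq> F n"
    by (meson interior_of_subset openin_interior_of subset_empty subset_eq)
  define c where "c = real (Suc n)"
  have c: "c > 0"
    by (simp add: c_def)
  define N where "N = {x \<in> S. c *\<^sub>R x \<in> U0}"
  have "openin T N"
    unfolding N_def
    by (intro openin_preimage U0(1) continuous_map_scaleR continuous_map_id[unfolded id_def]) simp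
  moreover have "N \<subseteq> T closure_of W"
  proof
    fix x assume "x \<in> N"
    then have "c *\<^sub>R x \<in> F n" using U0(3) by (auto simp: N_def)
    then show "x \<in> T closure_of W" by (simp add: F_def c_def)
  qed
  moreover have "inverse c *\<^sub>R a \<in> N"
    using U0 c(1) openin_subset_carrier[OF U0(1)] scaleR_mem by (auto simp: N_def)
  ultimately show ?thesis
    using interior_of_maximal by blast
qed

lemma zero_in_interior_of_closure_of:
  assumes T1: "tvs S T1" and T2: "tvs S T2" and cm2: "completely_metrizable_space T2"
    and V: "openin T1 V" "0 \<in> V"
  shows "0 \<in> T2 interior_of (T2 closure_of V)"
proof -
  interpret T1: tvs S T1 by (fact T1)
  interpret T2: tvs S T2 by (fact T2)
  obtain W where W: "openin T1 W" "0 \<in> W" "\<forall>a\<in>W. \<forall>b\<in>W. a - b \<in> V"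
    using T1.zero_nbhd_diff[OF V] by blast
  have absorb: "\<exists>n. inverse (real (Suc n)) *\<^sub>R x \<in> W" if x: "x \<in> S" for x
  proof -
    obtain r where r: "r > 0" "\<forall>c. \<bar>c\<bar> < r \<longrightarrow> c *\<^sub>R x \<in> W"
      using T1.absorbing[OF x W(1,2)] by blast
    then obtain n where "inverse (real (Suc n)) < r"
      using reals_Archimedean by blast
    then have "\<bar>inverse (real (Suc n))\<bar> < r"
      by simp
    then show ?thesis
      using r(2) by blast
  qed
  obtain a where a: "a \<in> T2 interior_of (T2 closure_of W)"
    using T2.interior_of_closure_of_absorbing[OF cm2 T1.openin_subset_carrier[OF W(1)] absorb] by blast
  then have aS: "a \<in> S"
    using interior_of_subset_topspace T2.topspace by (metis subsetD)
  define N where "N = {x \<in> S. x + a \<in> T2 interior_of (T2 closure_of W)}"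
  have "openin T2 N"
    unfolding N_def by (intro T2.openin_translation aS) simp
  moreover have "0 \<in> N"
    using a by (simp add: N_def)
  moreover have "N \<subseteq> T2 closure_of V"
  proof
    fix x assume "x \<in> N"
    then have "x + a \<in> T2 interior_of (T2 closure_of W)"
      by (simp add: N_def)
    then have "x + a \<in> T2 closure_of W"
      by (meson interior_of_subset subsetD)
    moreover have "a \<in> T2 closure_of W"
      using a by (meson interior_of_subset subsetD)
    ultimately have "(x + a) - a \<in> T2 closure_of V"
      using T2.diff_in_closure_of W(3) by blast
    then show "x \<in> T2 closure_of V" by simp
  qed
  ultimately show ?thesis
    using interior_of_maximal by blast
qed

definition halving_nbhd_sequence :: "'a::real_vector topology \<Rightarrow> 'a set \<Rightarrow> (nat \<Rightarrow> 'a set) \<Rightarrow> bool" where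
  "halving_nbhd_sequence T U V \<longleftrightarrow>
     (\<forall>n. openin T (V n) \<and> 0 \<in> V n) \<and> (\<forall>a\<in>V 0. \<forall>b\<in>V 0. a + b \<in> U) \<and>
     (\<forall>n. \<forall>a\<in>V (Suc n). \<forall>b\<in>V (Suc n). a + b \<in> V n) \<and>
     (\<forall>W. openin T W \<and> 0 \<in> W \<longrightarrow> (\<exists>N. \<forall>n\<ge>N. V n \<subseteq> W))"

lemma (in tvs) ex_halving_nbhd_sequence:
  assumes "metrizable_space T" "openin T U" "0 \<in> U"
  shows "\<exists>V. halving_nbhd_sequence T U V"
proof -
  obtain M d where "Metric_space M d" and T_eq: "T = Metric_space.mtopology M d"
    using assms(1) unfolding metrizable_space_def by blast
  then have M: "M = S"
    using Metric_space.topspace_mtopology topspace by metis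
  interpret Metric_space S d
    using \<open>Metric_space M d\<close> M by simp
  have T_eq: "T = mtopology" using T_eq M by simp
  define P where "P n W \<longleftrightarrow> openin T W \<and> 0 \<in> W \<and> (\<forall>a\<in>W. \<forall>b\<in>W. a + b \<in> U \<inter> mball 0 (1 / Suc n))"
    for n W
  have small: "W \<subseteq> U \<inter> mball 0 (1 / Suc n)" if "P n W" for n W
    using that unfolding P_def by (metis add.right_neutral subsetI)
  have "\<exists>W. P 0 W"
    using zero_nbhd_add[of "U \<inter> mball 0 (1 / Suc 0)"] assms(2,3) by (simp add: P_def T_eq openin_Int)
  moreover have "\<exists>W'. P (Suc n) W' \<and> (\<forall>a\<in>W'. \<forall>b\<in>W'. a + b \<in> W)" if W: "P n W" for n W
  proof -
    have "openin T (W \<inter> mball 0 (1 / Suc (Suc n)))" "0 \<in> W \<inter> mball 0 (1 / Suc (Suc n))"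
      using W by (simp_all add: P_def T_eq openin_Int)
    then obtain W' where W': "openin T W'" "0 \<in> W'"
      "\<forall>a\<in>W'. \<forall>b\<in>W'. a + b \<in> W \<inter> mball 0 (1 / Suc (Suc n))"
      using zero_nbhd_add by blast
    have "a + b \<in> U \<inter> mball 0 (1 / Suc (Suc n))" if "a \<in> W'" "b \<in> W'" for a b
    proof -
      have "a + b \<in> W" "a + b \<in> mball 0 (1 / Suc (Suc n))"
        using W'(3) that by auto
      then show ?thesis
        using small[OF W] by blast
    qed
    then have "P (Suc n) W'"
      using W'(1,2) by (simp add: P_def)
    with W'(3) show ?thesis
      by blast
  qed
  ultimately have "\<exists>V. \<forall>n. P n (V n) \<and> (\<forall>a\<in>V (Suc n). \<forall>b\<in>V (Suc n). a + b \<in> V n)"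
    by (rule dependent_nat_choice)
  then obtain V where V: "\<And>n. P n (V n)" "\<And>n. \<forall>a\<in>V (Suc n). \<forall>b\<in>V (Suc n). a + b \<in> V n"
    by blast
  have "\<exists>N. \<forall>n\<ge>N. V n \<subseteq> W" if "openin T W" "0 \<in> W" for W
  proof -
    have "\<exists>r>0. mball 0 r \<subseteq> W"
      using that by (simp add: T_eq openin_mtopology)
    then obtain r where r: "r > 0" "mball 0 r \<subseteq> W"
      by blast
    then obtain N where N: "inverse (real (Suc N)) < r"
      using reals_Archimedean by blast
    have "V n \<subseteq> W" if "n \<ge> N" for n
    proof -
      have "1 / real (Suc n) \<le> inverse (real (Suc N))"
        using that by (simp add: divide_inverse le_imp_inverse_le)
      then have "mball 0 (1 / Suc n) \<subseteq> mball 0 r"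
        using N by (intro mball_subset_concentric) simp
      then show ?thesis
        using small[OF V(1)] r(2) by blast
    qed
    then show ?thesis by blast
  qed
  then show ?thesis
    using V small unfolding halving_nbhd_sequence_def by (intro exI[of _ V]) (auto simp: P_def)
qed

lemma halving_telescope_mem:
  fixes s :: "nat \<Rightarrow> 'a::ab_group_add"
  assumes zero: "\<And>n. 0 \<in> V n"
    and halving: "\<And>n a b. a \<in> V (Suc n) \<Longrightarrow> b \<in> V (Suc n) \<Longrightarrow> a + b \<in> V n"
    and step: "\<And>n. s (Suc n) - s n \<in> V (Suc n)"
    and "k \<le> m"
  shows "s m - s k \<in> V k"
proof -
  have "s (k + d) - s k \<in> V k" for d
  proof (induction d arbitrary: k)
    case 0
    then show ?case using zero by simp
  next
    case (Suc d)
    have "s (k + Suc d) - s k = (s (Suc k) - s k) + (s (Suc k + d) - s (Suc k))"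
      by simp
    then show ?case
      using halving[OF step Suc.IH] by simp
  qed
  then show ?thesis
    using \<open>k \<le> m\<close> le_Suc_ex by blast
qed

lemma (in tvs) tvs_CauchyI_shrinking:
  assumes "\<And>n. s n \<in> S" "\<And>k m. k \<le> m \<Longrightarrow> s m - s k \<in> V k"
    and shrink: "\<And>W. openin T W \<Longrightarrow> 0 \<in> W \<Longrightarrow> \<exists>N. \<forall>n\<ge>N. V n \<subseteq> W"
  shows "tvs_Cauchy s"
  unfolding tvs_Cauchy_def
proof (intro conjI allI impI)
  fix W assume "openin T W \<and> 0 \<in> W"
  then obtain P where P: "openin T P" "0 \<in> P" "\<forall>a\<in>P. \<forall>b\<in>P. a - b \<in> W"
    using zero_nbhd_diff by blast
  obtain N where N: "\<forall>n\<ge>N. V n \<subseteq> P"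
    using shrink[OF P(1,2)] by blast
  have "s m - s n \<in> W" if "m \<ge> N" "n \<ge> N" for m n
  proof -
    have "s m - s N \<in> P" "s n - s N \<in> P"
      using assms(2) N that by blast+
    then have "(s m - s N) - (s n - s N) \<in> W"
      using P(3) by blast
    then show ?thesis by simp
  qed
  then show "\<exists>N. \<forall>m\<ge>N. \<forall>n\<ge>N. s m - s n \<in> W"
    by blast
qed (use assms(1) in simp)

lemma zero_if_in_closure_of_shrinking:
  fixes V :: "nat \<Rightarrow> 'a::zero set"
  assumes T2: "Hausdorff_space T2" "0 \<in> topspace T2"
    and coarser: "\<And>W. openin T2 W \<Longrightarrow> openin T1 W"
    and shrink: "\<And>W. openin T1 W \<Longrightarrow> 0 \<in> W \<Longrightarrow> \<exists>N. \<forall>n\<ge>N. V n \<subseteq> W"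
    and z: "\<And>k. z \<in> T2 closure_of V k"
  shows "z = 0"
proof (rule ccontr)
  assume "z \<noteq> 0"
  moreover have "z \<in> topspace T2"
    using z[of 0] in_closure_of by fast
  ultimately obtain A B where AB: "openin T2 A" "openin T2 B" "0 \<in> A" "z \<in> B" "disjnt A B"
    using T2 unfolding Hausdorff_space_def by metis
  obtain N where "\<forall>n\<ge>N. V n \<subseteq> A"
    using shrink[OF coarser[OF AB(1)] AB(3)] by blast
  then have "V N \<subseteq> A"
    by blast
  moreover obtain v where "v \<in> V N" "v \<in> B"
    using z[of N] AB(2,4) unfolding in_closure_of by blast
  ultimately show False
    using AB(5) by (auto simp: disjnt_def)
qed

lemma closure_approximating_sequence:
  assumes T1: "tvs S T1" and T2: "tvs S T2" and cm2: "completely_metrizable_space T2"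
    and V: "\<And>n. openin T1 (V n)" "\<And>n. 0 \<in> V n" and y: "y \<in> T2 closure_of V 1"
  shows "\<exists>s. \<forall>n. (s n \<in> S \<and> y - s n \<in> T2 closure_of V (Suc n) \<and> (n = 0 \<longrightarrow> s n = 0)) \<and>
              s (Suc n) - s n \<in> V (Suc n)"
proof (rule dependent_nat_choice)
  interpret T1: tvs S T1 by (fact T1)
  interpret T2: tvs S T2 by (fact T2)
  show "\<exists>s. s \<in> S \<and> y - s \<in> T2 closure_of V (Suc 0) \<and> (0 = 0 \<longrightarrow> s = 0)"
    using y by (intro exI[of _ 0]) simp
  fix s n assume s: "s \<in> S \<and> y - s \<in> T2 closure_of V (Suc n) \<and> (n = 0 \<longrightarrow> s = 0)"
  define D where "D = T2 interior_of (T2 closure_of V (Suc (Suc n)))"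
  have "0 \<in> D"
    unfolding D_def using zero_in_interior_of_closure_of[OF T1 T2 cm2 V(1,2)] .
  have ys: "y - s \<in> S"
    using s in_closure_of T2.topspace by fast
  have "y \<in> S"
    using y in_closure_of T2.topspace by fast
  define E where "E = {v \<in> S. (y - s) - v \<in> D}"
  have "openin T2 E"
    unfolding E_def
    by (intro T2.openin_preimage T2.continuous_map_diff) (use s \<open>y \<in> S\<close> in \<open>simp_all add: D_def T2.topspace\<close>)
  moreover have "y - s \<in> E"
    using ys \<open>0 \<in> D\<close> by (simp add: E_def)
  ultimately obtain v where v: "v \<in> V (Suc n)" "v \<in> E"
    using s unfolding in_closure_of by blast
  have "v \<in> S"
    using v(1) T1.openin_subset_carrier[OF V(1)] by blast
  moreover have "(y - s) - v \<in> T2 closure_of V (Suc (Suc n))"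
    using v(2) interior_of_subset by (fastforce simp: E_def D_def)
  ultimately show "\<exists>s'. (s' \<in> S \<and> y - s' \<in> T2 closure_of V (Suc (Suc n)) \<and> (Suc n = 0 \<longrightarrow> s' = 0)) \<and>
      s' - s \<in> V (Suc n)"
    using s v(1) T1.add_mem by (intro exI[of _ "s + v"]) (simp add: diff_diff_eq)
qed

lemma halving_nbhd_sequenceD:
  assumes "halving_nbhd_sequence T U V"
  shows "openin T (V n)" "0 \<in> V n"
    and "\<And>a b. a \<in> V 0 \<Longrightarrow> b \<in> V 0 \<Longrightarrow> a + b \<in> U"
    and "\<And>n a b. a \<in> V (Suc n) \<Longrightarrow> b \<in> V (Suc n) \<Longrightarrow> a + b \<in> V n"
    and "\<And>W. openin T W \<Longrightarrow> 0 \<in> W \<Longrightarrow> \<exists>N. \<forall>n\<ge>N. V n \<subseteq> W"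
    and "n \<le> n' \<Longrightarrow> V n' \<subseteq> V n"
proof -
  show "openin T (V n)" "0 \<in> V n"
    using assms by (simp_all add: halving_nbhd_sequence_def)
  show halving: "\<And>n a b. a \<in> V (Suc n) \<Longrightarrow> b \<in> V (Suc n) \<Longrightarrow> a + b \<in> V n"
    using assms unfolding halving_nbhd_sequence_def by blast
  show "\<And>a b. a \<in> V 0 \<Longrightarrow> b \<in> V 0 \<Longrightarrow> a + b \<in> U"
    using assms unfolding halving_nbhd_sequence_def by blast
  show "\<And>W. openin T W \<Longrightarrow> 0 \<in> W \<Longrightarrow> \<exists>N. \<forall>n\<ge>N. V n \<subseteq> W"
    using assms unfolding halving_nbhd_sequence_def by blast
  have "V (Suc k) \<subseteq> V k" for k
    using halving[of _ k 0] assms by (fastforce simp: halving_nbhd_sequence_def)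
  then show "n \<le> n' \<Longrightarrow> V n' \<subseteq> V n"
    by (rule lift_Suc_antimono_le)
qed

lemma (in tvs) limit_mem_if_halving:
  assumes V: "halving_nbhd_sequence T U V" and s: "limitin T s \<sigma> sequentially" "\<And>m. s m \<in> V 0"
  shows "\<sigma> \<in> U"
proof -
  have \<sigma>: "\<sigma> \<in> S"
    using limitin_topspace[OF s(1)] topspace by simp
  have "openin T {v \<in> S. \<sigma> - v \<in> V 0}"
    by (intro openin_preimage continuous_map_diff halving_nbhd_sequenceD(1)[OF V])
      (simp_all add: topspace \<sigma> continuous_map_id[unfolded id_def])
  moreover have "\<sigma> \<in> {v \<in> S. \<sigma> - v \<in> V 0}"
    using \<sigma> halving_nbhd_sequenceD(2)[OF V] by simp
  ultimately obtain m where "\<sigma> - s m \<in> V 0"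
    using s(1) unfolding limitin_sequentially by blast
  then have "s m + (\<sigma> - s m) \<in> U"
    using halving_nbhd_sequenceD(3)[OF V s(2)] by blast
  then show ?thesis
    by simp
qed

lemma closure_of_halving_subset:
  assumes T1: "tvs S T1" and T2: "tvs S T2"
    and cm1: "completely_metrizable_space T1" and cm2: "completely_metrizable_space T2"
    and coarser: "\<And>W. openin T2 W \<Longrightarrow> openin T1 W"
    and V: "halving_nbhd_sequence T1 U V"
  shows "T2 closure_of V 1 \<subseteq> U"
proof
  interpret T1: tvs S T1 by (fact T1)
  interpret T2: tvs S T2 by (fact T2)
  note V' = halving_nbhd_sequenceD[OF V]
  have id12: "continuous_map T1 T2 (\<lambda>x. x)"
    using topology_finer_continuous_id[of T2 T1] coarser T1.topspace T2.topspace by (simp add: id_def)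
  fix y assume y: "y \<in> T2 closure_of V 1"
  obtain s where s: "\<And>n. s n \<in> S" "\<And>n. y - s n \<in> T2 closure_of V (Suc n)" "s 0 = 0"
    "\<And>n. s (Suc n) - s n \<in> V (Suc n)"
    using closure_approximating_sequence[of S T1 T2 V y, OF T1 T2 cm2 V'(1) V'(2) y] by blast
  have tail: "s m - s k \<in> V k" if "k \<le> m" for k m
    using halving_telescope_mem[of V s, OF V'(2) V'(4) s(4) that] .
  obtain \<sigma> where \<sigma>: "limitin T1 s \<sigma> sequentially"
    using T1.tvs_Cauchy_convergent[OF cm1 T1.tvs_CauchyI_shrinking[OF s(1) tail V'(5)]] by blast
  have "\<sigma> \<in> U"
    using T1.limit_mem_if_halving[OF V \<sigma>] tail[of 0] s(3) by simp
  have "limitin T2 (\<lambda>n. y - s n) (y - \<sigma>) sequentially"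
  proof -
    have "y \<in> S"
      using y in_closure_of T2.topspace by fast
    then have "continuous_map T2 T2 (\<lambda>v. y - v)"
      by (intro T2.continuous_map_diff) (simp_all add: T2.topspace continuous_map_id[unfolded id_def])
    from continuous_map_limit[OF this continuous_map_limit[OF id12 \<sigma>]]
    show ?thesis by (simp add: o_def)
  qed
  moreover have "eventually (\<lambda>n. y - s n \<in> T2 closure_of V k) sequentially" for k
    unfolding eventually_sequentially
    using s(2) closure_of_mono[OF V'(6)] by (meson le_SucI subsetD)
  ultimately have mem: "y - \<sigma> \<in> T2 closure_of V k" for k
    by (intro limitin_closedin) auto
  have "Hausdorff_space T2"
    using cm2 completely_metrizable_imp_metrizable_space metrizable_imp_Hausdorff_space by blast
  then have "y - \<sigma> = 0"
    by (rule zero_if_in_closure_of_shrinking[OF _ _ coarser V'(5) mem]) (simp add: T2.topspace)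
  then show "y \<in> U"
    using \<open>\<sigma> \<in> U\<close> by simp
qed

theorem tvs_topology_eq_if_coarser:
  assumes T1: "tvs S T1" and T2: "tvs S T2"
    and cm1: "completely_metrizable_space T1" and cm2: "completely_metrizable_space T2"
    and coarser: "\<And>W. openin T2 W \<Longrightarrow> openin T1 W"
  shows "T1 = T2"
proof -
  interpret T1: tvs S T1 by (fact T1)
  interpret T2: tvs S T2 by (fact T2)
  have "openin T2 U" if U: "openin T1 U" for U
  proof (subst openin_subopen, intro ballI)
    fix x assume x: "x \<in> U"
    then have xS: "x \<in> S"
      using T1.openin_subset_carrier[OF U] by blast
    define U' where "U' = {w \<in> S. w + x \<in> U}"
    have "openin T1 U'" "0 \<in> U'"
      using T1.openin_translation[OF xS U] x by (simp_all add: U'_def)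
    then obtain V where V: "halving_nbhd_sequence T1 U' V"
      using T1.ex_halving_nbhd_sequence[OF completely_metrizable_imp_metrizable_space[OF cm1]] by blast
    define N where "N = T2 interior_of (T2 closure_of V 1)"
    have N: "openin T2 N" "0 \<in> N"
      using zero_in_interior_of_closure_of[OF T1 T2 cm2] halving_nbhd_sequenceD(1,2)[OF V]
      by (simp_all add: N_def)
    have "N \<subseteq> U'"
      using interior_of_subset[of T2 "T2 closure_of V 1"] closure_of_halving_subset[OF T1 T2 cm1 cm2 coarser V]
      unfolding N_def by (rule order_trans)
    define N' where "N' = {v \<in> S. v + - x \<in> N}"
    have "openin T2 N'"
      unfolding N'_def using T2.openin_translation[OF T2.scaleR_mem[OF xS, of "- 1"] N(1)] by simp
    moreover have "x \<in> N'"
      using xS N(2) by (simp add: N'_def)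
    moreover have "N' \<subseteq> U"
      using \<open>N \<subseteq> U'\<close> by (auto simp: N'_def U'_def)
    ultimately show "\<exists>T. openin T2 T \<and> x \<in> T \<and> T \<subseteq> U"
      by blast
  qed
  then have "openin T1 U \<longleftrightarrow> openin T2 U" for U
    using coarser by blast
  then show ?thesis
    by (simp add: topology_eq)
qed

section \<open>Continuity of inclusions\<close>

(* The coarsest topology on Y finer than T1 and than the trace of T2. *)
definition join_topology :: "'a set \<Rightarrow> 'a topology \<Rightarrow> 'a topology \<Rightarrow> 'a topology" where
  "join_topology Y T1 T2 = pullback_topology Y (\<lambda>y. (y, y)) (prod_topology T1 T2)"

lemma topspace_join_topology:
  "topspace T1 = Y \<Longrightarrow> Y \<subseteq> topspace T2 \<Longrightarrow> topspace (join_topology Y T1 T2) = Y"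
  by (auto simp: join_topology_def topspace_pullback_topology)

lemma continuous_map_join_topology:
  "continuous_map X (join_topology Y T1 T2) f \<longleftrightarrow>
     f \<in> topspace X \<rightarrow> Y \<and> continuous_map X T1 f \<and> continuous_map X T2 f"
proof
  assume f: "continuous_map X (join_topology Y T1 T2) f"
  have "continuous_map (join_topology Y T1 T2) T1 (\<lambda>x. x)" "continuous_map (join_topology Y T1 T2) T2 (\<lambda>x. x)"
    using continuous_map_pullback[OF continuous_map_fst, of Y "\<lambda>y. (y, y)" T1 T2]
      continuous_map_pullback[OF continuous_map_snd, of Y "\<lambda>y. (y, y)" T1 T2]
    by (simp_all add: join_topology_def o_def)
  then have "continuous_map X T1 f" "continuous_map X T2 f"
    using continuous_map_compose[OF f] by (simp_all add: o_def)
  moreover have "f \<in> topspace X \<rightarrow> Y"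
    using continuous_map_funspace[OF f] by (auto simp: join_topology_def topspace_pullback_topology)
  ultimately show "f \<in> topspace X \<rightarrow> Y \<and> continuous_map X T1 f \<and> continuous_map X T2 f"
    by blast
next
  assume "f \<in> topspace X \<rightarrow> Y \<and> continuous_map X T1 f \<and> continuous_map X T2 f"
  then show "continuous_map X (join_topology Y T1 T2) f"
    unfolding join_topology_def
    by (intro continuous_map_pullback') (auto simp: o_def continuous_map_pairedI)
qed

lemma tvs_join_topology:
  assumes "tvs Y T1" "tvs Z T2" "Y \<subseteq> Z"
  shows "tvs Y (join_topology Y T1 T2)"
proof -
  interpret T1: tvs Y T1 by fact
  interpret T2: tvs Z T2 by fact
  let ?J = "join_topology Y T1 T2"
  have top: "topspace ?J = Y"
    using T1.topspace T2.topspace assms(3) by (simp add: topspace_join_topology)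
  have J1: "continuous_map ?J T1 (\<lambda>x. x)" and J2: "continuous_map ?J T2 (\<lambda>x. x)"
    using continuous_map_join_topology[of ?J Y T1 T2 "\<lambda>x. x"] by (auto simp: top)
  show ?thesis
  proof
    show "subspace Y" "topspace ?J = Y"
      by (fact T1.subspace top)+
    have "continuous_map (prod_topology ?J ?J) T (\<lambda>z. fst z + snd z)"
      if "tvs S T" "continuous_map ?J T (\<lambda>x. x)" for S and T :: "'a topology"
      by (intro tvs.continuous_map_add[OF that(1)]
          continuous_map_compose[OF continuous_map_fst that(2), unfolded o_def]
          continuous_map_compose[OF continuous_map_snd that(2), unfolded o_def])
    then show "continuous_map (prod_topology ?J ?J) ?J (\<lambda>(x, y). x + y)"
      using T1.add_mem J1 J2 assms(1,2)
      by (auto simp: continuous_map_join_topology case_prod_unfold top)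
    have "continuous_map (prod_topology euclideanreal ?J) T (\<lambda>z. fst z *\<^sub>R snd z)"
      if "tvs S T" "continuous_map ?J T (\<lambda>x. x)" for S and T :: "'a topology"
      by (intro tvs.continuous_map_scaleR[OF that(1) continuous_map_fst]
          continuous_map_compose[OF continuous_map_snd that(2), unfolded o_def])
    then show "continuous_map (prod_topology euclideanreal ?J) ?J (\<lambda>(r, x). r *\<^sub>R x)"
      using T1.scaleR_mem J1 J2 assms(1,2)
      by (auto simp: continuous_map_join_topology case_prod_unfold top)
  qed
qed

lemma completely_metrizable_join_topology:
  assumes cm1: "completely_metrizable_space T1" and cm2: "completely_metrizable_space T2"
    and top: "topspace T1 = Y" "Y \<subseteq> topspace T2"
    and H: "Hausdorff_space H" "continuous_map T1 H (\<lambda>x. x)" "continuous_map T2 H (\<lambda>x. x)"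
  shows "completely_metrizable_space (join_topology Y T1 T2)"
proof -
  let ?P = "prod_topology T1 T2" and ?J = "join_topology Y T1 T2"
  define D where "D = {p \<in> topspace ?P. fst p = snd p}"
  have "closedin ?P D"
    unfolding D_def using H(1)
    by (rule closedin_continuous_maps_eq)
      (use continuous_map_compose[OF continuous_map_fst H(2)]
        continuous_map_compose[OF continuous_map_snd H(3)] in \<open>simp_all add: o_def\<close>)
  then have "completely_metrizable_space (subtopology ?P D)"
    using cm1 cm2 by (simp add: completely_metrizable_space_closedin completely_metrizable_space_prod_topology)
  moreover have "homeomorphic_maps ?J (subtopology ?P D) (\<lambda>y. (y, y)) fst"
    unfolding homeomorphic_maps_def
  proof (intro conjI ballI)
    have J: "topspace ?J = Y"
      using top by (simp add: topspace_join_topology)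
    have "continuous_map ?J T1 (\<lambda>x. x)" "continuous_map ?J T2 (\<lambda>x. x)"
      using continuous_map_join_topology[of ?J Y T1 T2 "\<lambda>x. x"] by (auto simp: J)
    then show "continuous_map ?J (subtopology ?P D) (\<lambda>y. (y, y))"
      using J top by (intro continuous_map_into_subtopology continuous_map_pairedI) (auto simp: D_def)
    have "continuous_map (subtopology ?P D) T2 fst"
      by (rule continuous_map_eq[OF continuous_map_from_subtopology[OF continuous_map_snd]])
        (auto simp: D_def)
    then show "continuous_map (subtopology ?P D) ?J fst"
      using top continuous_map_from_subtopology[OF continuous_map_fst]
      by (auto simp: continuous_map_join_topology D_def)
    show "fst (y, y) = y" for y
      by simp
    show "(fst p, fst p) = p" if "p \<in> topspace (subtopology ?P D)" for p
      using that by (auto simp: D_def prod_eq_iff)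
  qed
  ultimately show ?thesis
    using homeomorphic_completely_metrizable_space homeomorphic_maps_imp_homeomorphic_space by blast
qed

theorem continuous_map_inclusion_tvs:
  assumes TY: "tvs Y TY" and TZ: "tvs Z TZ" and YZ: "Y \<subseteq> Z"
    and cmY: "completely_metrizable_space TY" and cmZ: "completely_metrizable_space TZ"
    and H: "Hausdorff_space H" "continuous_map TY H (\<lambda>x. x)" "continuous_map TZ H (\<lambda>x. x)"
  shows "continuous_map TY TZ (\<lambda>x. x)"
proof -
  let ?J = "join_topology Y TY TZ"
  have top: "topspace TY = Y" "Y \<subseteq> topspace TZ"
    using TY TZ YZ by (simp_all add: tvs_def)
  have JY: "continuous_map ?J TY (\<lambda>x. x)"
    using continuous_map_join_topology[of ?J Y TY TZ "\<lambda>x. x"] by auto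
  have "openin ?J W" if "openin TY W" for W
  proof -
    have "openin ?J {x \<in> topspace ?J. x \<in> W}"
      using openin_continuous_map_preimage[OF JY that] .
    moreover have "{x \<in> topspace ?J. x \<in> W} = W"
      using openin_subset[OF that] top by (auto simp: topspace_join_topology)
    ultimately show ?thesis
      by simp
  qed
  then have "?J = TY"
    using tvs_topology_eq_if_coarser[OF tvs_join_topology[OF TY TZ YZ] TY
        completely_metrizable_join_topology[OF cmY cmZ top H] cmY] by blast
  moreover have "continuous_map ?J TZ (\<lambda>x. x)"
    using continuous_map_join_topology[of ?J Y TY TZ "\<lambda>x. x"] by auto
  ultimately show ?thesis
    by simp
qed

lemma tvs_subtopology:
  assumes "tvs Z T" "subspace Y" "Y \<subseteq> Z"
  shows "tvs Y (subtopology T Y)"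
proof -
  interpret tvs Z T by fact
  have top: "topspace (subtopology T Y) = Y"
    using assms(3) topspace by (simp add: Int_absorb1)
  have incl: "continuous_map (subtopology T Y) T (\<lambda>x. x)"
    by (rule continuous_map_from_subtopology) (simp add: continuous_map_id[unfolded id_def])
  show ?thesis
  proof
    show "subspace Y" "topspace (subtopology T Y) = Y"
      by (fact assms(2) top)+
    have "continuous_map (prod_topology (subtopology T Y) (subtopology T Y)) T (\<lambda>z. fst z + snd z)"
      by (intro continuous_map_add continuous_map_compose[OF continuous_map_fst incl, unfolded o_def]
          continuous_map_compose[OF continuous_map_snd incl, unfolded o_def])
    then show "continuous_map (prod_topology (subtopology T Y) (subtopology T Y)) (subtopology T Y)
        (\<lambda>(x, y). x + y)"
      using subspace_add[OF assms(2)]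
      by (auto simp: case_prod_unfold top intro!: continuous_map_into_subtopology)
    have "continuous_map (prod_topology euclideanreal (subtopology T Y)) T (\<lambda>z. fst z *\<^sub>R snd z)"
      by (intro continuous_map_scaleR continuous_map_fst
          continuous_map_compose[OF continuous_map_snd incl, unfolded o_def])
    then show "continuous_map (prod_topology euclideanreal (subtopology T Y)) (subtopology T Y)
        (\<lambda>(r, x). r *\<^sub>R x)"
      using subspace_scale[OF assms(2)]
      by (auto simp: case_prod_unfold top intro!: continuous_map_into_subtopology)
  qed
qed

section \<open>The Hahn-Banach theorem\<close>

definition linear_on :: "'a::real_vector set \<Rightarrow> ('a \<Rightarrow> real) \<Rightarrow> bool" where
  "linear_on D h \<longleftrightarrow> (\<forall>x\<in>D. \<forall>y\<in>D. h (x + y) = h x + h y) \<and> (\<forall>x\<in>D. \<forall>r. h (r *\<^sub>R x) = r * h x)"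

definition sublinear_on :: "'a::real_vector set \<Rightarrow> ('a \<Rightarrow> real) \<Rightarrow> bool" where
  "sublinear_on Z p \<longleftrightarrow> (\<forall>x\<in>Z. \<forall>y\<in>Z. p (x + y) \<le> p x + p y) \<and> (\<forall>x\<in>Z. \<forall>r>0. p (r *\<^sub>R x) = r * p x)"

lemma dominated_extension_constant:
  fixes p h :: "'a::real_vector \<Rightarrow> real"
  assumes D: "subspace D" "D \<subseteq> Z" and Z: "subspace Z" and p: "sublinear_on Z p"
    and h: "linear_on D h" "\<forall>x\<in>D. h x \<le> p x" and w: "w \<in> Z"
  shows "\<exists>c. \<forall>m\<in>D. h m - p (m - w) \<le> c \<and> c \<le> p (m + w) - h m"
proof -
  have bound: "h m1 - p (m1 - w) \<le> p (m2 + w) - h m2" if m: "m1 \<in> D" "m2 \<in> D" for m1 m2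
  proof -
    have "h m1 + h m2 = h (m1 + m2)"
      using h(1) m by (simp add: linear_on_def)
    also have "\<dots> \<le> p ((m1 - w) + (m2 + w))"
      using h(2) subspace_add[OF D(1) m] by simp
    also have "\<dots> \<le> p (m1 - w) + p (m2 + w)"
      using p m D(2) w subspace_diff[OF Z] subspace_add[OF Z] unfolding sublinear_on_def
      by (meson subsetD)
    finally show ?thesis by simp
  qed
  define L where "L = {h m - p (m - w) | m. m \<in> D}"
  have "L \<noteq> {}" "bdd_above L"
    using bound[OF _ subspace_0[OF D(1)]] subspace_0[OF D(1)] unfolding L_def bdd_above_def by blast+
  then have "h m - p (m - w) \<le> Sup L \<and> Sup L \<le> p (m + w) - h m" if "m \<in> D" for m
    using that bound unfolding L_def by (auto intro!: cSup_upper cSup_least)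
  then show ?thesis
    by blast
qed

lemma dominated_extension_step:
  fixes p h :: "'a::real_vector \<Rightarrow> real"
  assumes D: "subspace D" "D \<subseteq> Z" and Z: "subspace Z" and p: "sublinear_on Z p"
    and h: "linear_on D h" "\<forall>x\<in>D. h x \<le> p x" and w: "w \<in> Z"
  shows "\<exists>c. \<forall>m\<in>D. \<forall>t. h m + t * c \<le> p (m + t *\<^sub>R w)"
proof -
  obtain c where c1: "\<And>m. m \<in> D \<Longrightarrow> h m - p (m - w) \<le> c"
    and c2: "\<And>m. m \<in> D \<Longrightarrow> c \<le> p (m + w) - h m"
    using dominated_extension_constant[OF assms] by blast
  have hscale: "h (r *\<^sub>R x) = r * h x" if "x \<in> D" for x r
    using h(1) that by (simp add: linear_on_def)
  have pscale: "p (r *\<^sub>R x) = r * p x" if "x \<in> Z" "r > 0" for x r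
    using p that by (simp add: sublinear_on_def)
  have DZ: "x \<in> D \<Longrightarrow> x \<in> Z" for x
    using D(2) by blast
  have "h m + t * c \<le> p (m + t *\<^sub>R w)" if m: "m \<in> D" for m t
  proof (cases t "0::real" rule: linorder_cases)
    case less
    define s where "s = - t"
    define m' where "m' = inverse s *\<^sub>R m"
    have s: "s > 0" "t * c = - (s * c)"
      using less by (simp_all add: s_def)
    have m': "m' \<in> D"
      unfolding m'_def using subspace_scale[OF D(1) m] .
    have "s * h m' - s * p (m' - w) \<le> s * c"
      using c1[OF m'] s(1) by (simp add: right_diff_distrib[symmetric])
    moreover have "s * h m' = h m"
      using hscale[OF m, of "inverse s"] s(1) by (simp add: m'_def)
    moreover have "s * p (m' - w) = p (m + t *\<^sub>R w)"
      using pscale[of "m' - w" s] s(1) m' w DZ subspace_diff[OF Z]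
      by (simp add: m'_def s_def algebra_simps)
    ultimately show ?thesis
      using s(2) by linarith
  next
    case equal
    then show ?thesis using h(2) m by simp
  next
    case greater
    define m' where "m' = inverse t *\<^sub>R m"
    have m': "m' \<in> D"
      unfolding m'_def using subspace_scale[OF D(1) m] .
    have "t * c \<le> t * p (m' + w) - t * h m'"
      using c2[OF m'] greater by (simp add: right_diff_distrib[symmetric])
    moreover have "t * h m' = h m"
      using hscale[OF m, of "inverse t"] greater by (simp add: m'_def)
    moreover have "t * p (m' + w) = p (m + t *\<^sub>R w)"
      using pscale[of "m' + w" t] greater m' w DZ subspace_add[OF Z]
      by (simp add: m'_def algebra_simps)
    ultimately show ?thesis
      by linarith
  qed
  then show ?thesis by blast
qed

(* Graphs of linear extensions of u to subspaces of Z dominated by p; Zorn's lemma is applied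
   to them, ordered by inclusion. *)
definition dominated_extension_graphs ::
  "'a::real_vector set \<Rightarrow> ('a \<Rightarrow> real) \<Rightarrow> 'a set \<Rightarrow> ('a \<Rightarrow> real) \<Rightarrow> ('a \<times> real) set set" where
  "dominated_extension_graphs Z p Y u = {G.
     (\<forall>a r s. (a, r) \<in> G \<longrightarrow> (a, s) \<in> G \<longrightarrow> r = s) \<and>
     (\<forall>a r. (a, r) \<in> G \<longrightarrow> a \<in> Z \<and> r \<le> p a) \<and>
     (\<forall>y\<in>Y. (y, u y) \<in> G) \<and>
     (\<forall>a r b s. (a, r) \<in> G \<longrightarrow> (b, s) \<in> G \<longrightarrow> (a + b, r + s) \<in> G) \<and>
     (\<forall>a r c. (a, r) \<in> G \<longrightarrow> (c *\<^sub>R a, c * r) \<in> G)}"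

lemma ex_maximal_dominated_extension_graph:
  assumes "subspace Y" "Y \<subseteq> Z" "linear_on Y u" "\<forall>y\<in>Y. u y \<le> p y"
  shows "\<exists>M\<in>dominated_extension_graphs Z p Y u.
           \<forall>G\<in>dominated_extension_graphs Z p Y u. M \<subseteq> G \<longrightarrow> G = M"
proof (rule Zorn_Lemma2, intro ballI)
  let ?A = "dominated_extension_graphs Z p Y u"
  fix C assume C: "C \<in> chains ?A"
  have G0: "{(y, u y) | y. y \<in> Y} \<in> ?A"
    using assms subspace_add[OF assms(1)] subspace_scale[OF assms(1)]
    by (auto simp: dominated_extension_graphs_def linear_on_def)
  show "\<exists>U\<in>?A. \<forall>G\<in>C. G \<subseteq> U"
  proof (cases "C = {}")
    case True
    then show ?thesis using G0 by blast
  next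
    case False
    have CA: "C \<subseteq> ?A" and chain: "\<And>G G'. G \<in> C \<Longrightarrow> G' \<in> C \<Longrightarrow> G \<subseteq> G' \<or> G' \<subseteq> G"
      using C unfolding chains_def chain_subset_def by blast+
    have common: "\<exists>G\<in>C. P \<in> G \<and> Q \<in> G" if "P \<in> \<Union>C" "Q \<in> \<Union>C" for P Q
      using that chain by blast
    have "\<Union>C \<in> ?A"
      unfolding dominated_extension_graphs_def
    proof (intro CollectI conjI allI impI ballI)
      fix a r s assume "(a, r) \<in> \<Union>C" "(a, s) \<in> \<Union>C"
      then obtain G where "G \<in> C" "(a, r) \<in> G" "(a, s) \<in> G" using common by blast
      then show "r = s" using CA unfolding dominated_extension_graphs_def by blast
    next
      fix a r assume "(a, r) \<in> \<Union>C"
      then obtain G where "G \<in> C" "(a, r) \<in> G" by blast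
      then show "a \<in> Z" "r \<le> p a" using CA unfolding dominated_extension_graphs_def by blast+
    next
      fix y assume "y \<in> Y"
      obtain G where "G \<in> C" using False by blast
      then show "(y, u y) \<in> \<Union>C" using CA \<open>y \<in> Y\<close> unfolding dominated_extension_graphs_def by blast
    next
      fix a r b s assume "(a, r) \<in> \<Union>C" "(b, s) \<in> \<Union>C"
      then obtain G where "G \<in> C" "(a, r) \<in> G" "(b, s) \<in> G" using common by blast
      then show "(a + b, r + s) \<in> \<Union>C" using CA unfolding dominated_extension_graphs_def by blast
    next
      fix a r c assume "(a, r) \<in> \<Union>C"
      then obtain G where "G \<in> C" "(a, r) \<in> G" by blast
      then show "(c *\<^sub>R a, c * r) \<in> \<Union>C" using CA unfolding dominated_extension_graphs_def by blast
    qed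
    then show ?thesis by blast
  qed
qed

lemma dominated_extension_graph_function:
  assumes "G \<in> dominated_extension_graphs Z p Y u" "0 \<in> Y"
  shows "subspace (Domain G)" "Domain G \<subseteq> Z" "Y \<subseteq> Domain G"
    and "\<exists>h. linear_on (Domain G) h \<and> (\<forall>a\<in>Domain G. h a \<le> p a) \<and>
              (\<forall>a r. (a, r) \<in> G \<longleftrightarrow> a \<in> Domain G \<and> r = h a)"
proof -
  have functional: "\<And>a r s. (a, r) \<in> G \<Longrightarrow> (a, s) \<in> G \<Longrightarrow> r = s"
    and dom: "\<And>a r. (a, r) \<in> G \<Longrightarrow> a \<in> Z \<and> r \<le> p a"
    and ext: "\<And>y. y \<in> Y \<Longrightarrow> (y, u y) \<in> G"
    and add: "\<And>a r b s. (a, r) \<in> G \<Longrightarrow> (b, s) \<in> G \<Longrightarrow> (a + b, r + s) \<in> G"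
    and scale: "\<And>a r c. (a, r) \<in> G \<Longrightarrow> (c *\<^sub>R a, c * r) \<in> G"
    using assms(1) unfolding dominated_extension_graphs_def by blast+
  define h where "h a = (SOME r. (a, r) \<in> G)" for a
  have graph: "(a, r) \<in> G \<longleftrightarrow> a \<in> Domain G \<and> r = h a" for a r
  proof
    assume "(a, r) \<in> G"
    then show "a \<in> Domain G \<and> r = h a"
      using functional someI[of "\<lambda>r. (a, r) \<in> G" r] unfolding h_def by blast
  next
    assume "a \<in> Domain G \<and> r = h a"
    then show "(a, r) \<in> G"
      using someI_ex[of "\<lambda>r. (a, r) \<in> G"] unfolding h_def by blast
  qed
  then have hG: "a \<in> Domain G \<Longrightarrow> (a, h a) \<in> G" for a
    by blast
  show "subspace (Domain G)"
    unfolding subspace_def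
  proof (intro conjI ballI allI)
    show "0 \<in> Domain G"
      using ext[OF assms(2)] by blast
    show "x + y \<in> Domain G" if "x \<in> Domain G" "y \<in> Domain G" for x y
      using add[OF hG[OF that(1)] hG[OF that(2)]] by blast
    show "c *\<^sub>R x \<in> Domain G" if "x \<in> Domain G" for c x
      using scale[OF hG[OF that]] by blast
  qed
  show "Domain G \<subseteq> Z" "Y \<subseteq> Domain G"
    using dom ext by blast+
  have "linear_on (Domain G) h"
    unfolding linear_on_def
  proof (intro conjI ballI allI)
    show "h (x + y) = h x + h y" if "x \<in> Domain G" "y \<in> Domain G" for x y
      using add[OF hG[OF that(1)] hG[OF that(2)]] graph by simp
    show "h (r *\<^sub>R x) = r * h x" if "x \<in> Domain G" for x r
      using scale[OF hG[OF that]] graph by simp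
  qed
  moreover have "\<forall>a\<in>Domain G. h a \<le> p a"
    using dom hG by blast
  ultimately show "\<exists>h. linear_on (Domain G) h \<and> (\<forall>a\<in>Domain G. h a \<le> p a) \<and>
      (\<forall>a r. (a, r) \<in> G \<longleftrightarrow> a \<in> Domain G \<and> r = h a)"
    using graph by blast
qed

lemma subspace_add_scaleR_unique:
  fixes w :: "'a::real_vector"
  assumes D: "subspace D" "w \<notin> D" and m: "m1 \<in> D" "m2 \<in> D" and eq: "m1 + t1 *\<^sub>R w = m2 + t2 *\<^sub>R w"
  shows "m1 = m2 \<and> t1 = t2"
proof (cases "t1 = t2")
  case False
  have "(t1 - t2) *\<^sub>R w = (m1 + t1 *\<^sub>R w) - m1 - t2 *\<^sub>R w"
    by (simp add: algebra_simps)
  also have "\<dots> = m2 - m1"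
    using eq by simp
  finally have e: "(t1 - t2) *\<^sub>R w = m2 - m1" .
  have "w = inverse (t1 - t2) *\<^sub>R ((t1 - t2) *\<^sub>R w)"
    using False by simp
  then have "w = inverse (t1 - t2) *\<^sub>R (m2 - m1)"
    by (simp only: e)
  moreover have "inverse (t1 - t2) *\<^sub>R (m2 - m1) \<in> D"
    using m D(1) by (simp add: subspace_diff subspace_scale)
  ultimately show ?thesis
    using D(2) by simp
qed (use eq in simp)

lemma adjoin_dominated_extension_graph:
  assumes D: "subspace D" "D \<subseteq> Z" "Y \<subseteq> D" and Z: "subspace Z"
    and h: "linear_on D h" "\<forall>y\<in>Y. h y = u y" and c: "\<forall>m\<in>D. \<forall>t. h m + t * c \<le> p (m + t *\<^sub>R w)"
    and w: "w \<in> Z" "w \<notin> D"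
  shows "{(m + t *\<^sub>R w, h m + t * c) | m t. m \<in> D} \<in> dominated_extension_graphs Z p Y u"
proof -
  define G where "G = {(m + t *\<^sub>R w, h m + t * c) | m t. m \<in> D}"
  have hadd: "h (x + y) = h x + h y" and hscale: "h (r *\<^sub>R x) = r * h x" if "x \<in> D" "y \<in> D" for x y r
    using h(1) that by (simp_all add: linear_on_def)
  have inG: "(m + t *\<^sub>R w, h m + t * c) \<in> G" if "m \<in> D" for m t
    unfolding G_def using that by blast
  have "G \<in> dominated_extension_graphs Z p Y u"
    unfolding dominated_extension_graphs_def
  proof (intro CollectI conjI allI impI ballI)
    fix a r s assume "(a, r) \<in> G" "(a, s) \<in> G"
    then obtain m1 t1 m2 t2 where "a = m1 + t1 *\<^sub>R w" "r = h m1 + t1 * c" "m1 \<in> D"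
      "a = m2 + t2 *\<^sub>R w" "s = h m2 + t2 * c" "m2 \<in> D"
      unfolding G_def by blast
    then show "r = s"
      using subspace_add_scaleR_unique[OF D(1) w(2), of m1 m2 t1 t2] by simp
  next
    fix a r assume "(a, r) \<in> G"
    then obtain m t where a: "a = m + t *\<^sub>R w" "r = h m + t * c" "m \<in> D"
      unfolding G_def by blast
    then show "a \<in> Z"
      using D(2) w(1) subspace_add[OF Z] subspace_scale[OF Z] by blast
    show "r \<le> p a"
      using c a by simp
  next
    fix y assume "y \<in> Y"
    then have "(y + 0 *\<^sub>R w, h y + 0 * c) \<in> G"
      using D(3) inG by blast
    then show "(y, u y) \<in> G"
      using h(2) \<open>y \<in> Y\<close> by simp
  next
    fix a r b s assume "(a, r) \<in> G" "(b, s) \<in> G"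
    then obtain m1 t1 m2 t2 where "a = m1 + t1 *\<^sub>R w" "r = h m1 + t1 * c" "m1 \<in> D"
      "b = m2 + t2 *\<^sub>R w" "s = h m2 + t2 * c" "m2 \<in> D"
      unfolding G_def by blast
    moreover have "(m1 + m2 + (t1 + t2) *\<^sub>R w, h (m1 + m2) + (t1 + t2) * c) \<in> G"
      using inG calculation(3,6) subspace_add[OF D(1)] by blast
    ultimately show "(a + b, r + s) \<in> G"
      using hadd by (simp add: algebra_simps)
  next
    fix a r d assume "(a, r) \<in> G"
    then obtain m t where "a = m + t *\<^sub>R w" "r = h m + t * c" "m \<in> D"
      unfolding G_def by blast
    moreover have "(d *\<^sub>R m + (d * t) *\<^sub>R w, h (d *\<^sub>R m) + (d * t) * c) \<in> G"
      using inG calculation(3) subspace_scale[OF D(1)] by blast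
    ultimately show "(d *\<^sub>R a, d * r) \<in> G"
      using hscale by (simp add: algebra_simps)
  qed
  then show ?thesis
    by (simp add: G_def)
qed

lemma dominated_extension_graph_enlarge:
  assumes G: "G \<in> dominated_extension_graphs Z p Y u" "0 \<in> Y" and Z: "subspace Z" "sublinear_on Z p"
    and w: "w \<in> Z" "w \<notin> Domain G"
  shows "\<exists>G'\<in>dominated_extension_graphs Z p Y u. G \<subseteq> G' \<and> G' \<noteq> G"
proof -
  define D where "D = Domain G"
  have D: "subspace D" "D \<subseteq> Z" "Y \<subseteq> D"
    using dominated_extension_graph_function[OF G] by (simp_all add: D_def)
  obtain h where h: "linear_on D h" "\<forall>a\<in>D. h a \<le> p a"
    and graph: "\<forall>a r. (a, r) \<in> G \<longleftrightarrow> a \<in> D \<and> r = h a"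
    using dominated_extension_graph_function(4)[OF G] unfolding D_def by blast
  have "\<forall>y\<in>Y. h y = u y"
    using G(1) graph by (simp add: dominated_extension_graphs_def)
  moreover obtain c where c: "\<forall>m\<in>D. \<forall>t. h m + t * c \<le> p (m + t *\<^sub>R w)"
    using dominated_extension_step[OF D(1,2) Z h w(1)] by blast
  ultimately have G': "{(m + t *\<^sub>R w, h m + t * c) | m t. m \<in> D} \<in> dominated_extension_graphs Z p Y u"
    (is "?G' \<in> _")
    using adjoin_dominated_extension_graph[OF D Z(1) h(1)] w by (simp add: D_def)
  have "G \<subseteq> ?G'"
  proof
    fix P assume "P \<in> G"
    then obtain a where "a \<in> D" "P = (a + 0 *\<^sub>R w, h a + 0 * c)"
      using graph by (cases P) auto
    then show "P \<in> ?G'"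
      by blast
  qed
  moreover have "(0 + 1 *\<^sub>R w, h 0 + 1 * c) \<in> ?G'"
    using subspace_0[OF D(1)] by blast
  then have "?G' \<noteq> G"
    using w(2) by (auto simp: D_def)
  ultimately show ?thesis
    using G' by blast
qed

theorem Hahn_Banach_real:
  assumes "subspace Y" "subspace Z" "Y \<subseteq> Z" "sublinear_on Z p" "linear_on Y u" "\<forall>y\<in>Y. u y \<le> p y"
  shows "\<exists>U. linear_on Z U \<and> (\<forall>y\<in>Y. U y = u y) \<and> (\<forall>x\<in>Z. U x \<le> p x)"
proof -
  obtain M where M: "M \<in> dominated_extension_graphs Z p Y u"
    and max: "\<forall>G\<in>dominated_extension_graphs Z p Y u. M \<subseteq> G \<longrightarrow> G = M"
    using ex_maximal_dominated_extension_graph[OF assms(1,3,5,6)] by blast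
  have Y0: "0 \<in> Y"
    using assms(1) by (rule subspace_0)
  have "Domain M = Z"
  proof (rule ccontr)
    assume "Domain M \<noteq> Z"
    then obtain w where "w \<in> Z" "w \<notin> Domain M"
      using dominated_extension_graph_function(2)[OF M Y0] by blast
    then obtain G where "G \<in> dominated_extension_graphs Z p Y u" "M \<subseteq> G" "G \<noteq> M"
      using dominated_extension_graph_enlarge[OF M Y0 assms(2,4)] by blast
    then show False
      using max by blast
  qed
  obtain U where U: "linear_on (Domain M) U" "\<forall>a\<in>Domain M. U a \<le> p a"
    and graph: "\<forall>a r. (a, r) \<in> M \<longleftrightarrow> a \<in> Domain M \<and> r = U a"
    using dominated_extension_graph_function(4)[OF M Y0] by blast
  have "U y = u y" if "y \<in> Y" for y
  proof -
    have "(y, u y) \<in> M"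
      using M that by (simp add: dominated_extension_graphs_def)
    then show ?thesis
      using graph by simp
  qed
  then show ?thesis
    using U \<open>Domain M = Z\<close> by (intro exI[of _ U]) simp
qed

(* Meaningful only where V absorbs x; otherwise this is Inf {}. *)
definition minkowski_functional :: "'a::real_vector set \<Rightarrow> 'a \<Rightarrow> real" where
  "minkowski_functional V x = Inf {t. 0 < t \<and> inverse t *\<^sub>R x \<in> V}"

lemma minkowski_functional_le:
  "0 < t \<Longrightarrow> inverse t *\<^sub>R x \<in> V \<Longrightarrow> minkowski_functional V x \<le> t"
  unfolding minkowski_functional_def
  by (rule cInf_lower) (auto simp: bdd_below_def intro!: exI[of _ 0])

lemma minkowski_functional_ge:
  assumes "\<exists>t>0. inverse t *\<^sub>R x \<in> V" "\<And>t. 0 < t \<Longrightarrow> inverse t *\<^sub>R x \<in> V \<Longrightarrow> a \<le> t"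
  shows "a \<le> minkowski_functional V x"
  unfolding minkowski_functional_def using assms by (intro cInf_greatest) auto

lemma minkowski_functional_add_le:
  assumes V: "convex V" and x: "\<exists>t>0. inverse t *\<^sub>R x \<in> V" and y: "\<exists>t>0. inverse t *\<^sub>R y \<in> V"
  shows "minkowski_functional V (x + y) \<le> minkowski_functional V x + minkowski_functional V y"
proof -
  let ?p = "minkowski_functional V"
  have sum: "?p (x + y) \<le> s + t"
    if s: "0 < s" "inverse s *\<^sub>R x \<in> V" and t: "0 < t" "inverse t *\<^sub>R y \<in> V" for s t
  proof (rule minkowski_functional_le)
    show "0 < s + t" using s t by simp
    have "(s / (s + t)) *\<^sub>R (inverse s *\<^sub>R x) + (t / (s + t)) *\<^sub>R (inverse t *\<^sub>R y) \<in> V"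
      using s t by (intro convexD[OF V]) (simp_all add: add_divide_distrib[symmetric])
    moreover have "(s / (s + t)) *\<^sub>R (inverse s *\<^sub>R x) + (t / (s + t)) *\<^sub>R (inverse t *\<^sub>R y)
        = inverse (s + t) *\<^sub>R (x + y)"
    proof -
      have "s / (s + t) * inverse s = inverse (s + t)" "t / (s + t) * inverse t = inverse (s + t)"
        using s(1) t(1) by (simp_all add: field_simps)
      then show ?thesis
        by (simp only: scaleR_scaleR scaleR_add_right)
    qed
    ultimately show "inverse (s + t) *\<^sub>R (x + y) \<in> V" by simp
  qed
  have "?p (x + y) - ?p y \<le> ?p x"
  proof (rule minkowski_functional_ge[OF x])
    fix s assume s: "0 < s" "inverse s *\<^sub>R x \<in> V"
    have "?p (x + y) - s \<le> ?p y"
      using sum[OF s] by (intro minkowski_functional_ge[OF y]) (simp add: algebra_simps)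
    then show "?p (x + y) - ?p y \<le> s" by simp
  qed
  then show ?thesis by simp
qed

lemma minkowski_functional_scaleR:
  assumes r: "0 < r" and x: "\<exists>t>0. inverse t *\<^sub>R x \<in> V" and rx: "\<exists>t>0. inverse t *\<^sub>R (r *\<^sub>R x) \<in> V"
  shows "minkowski_functional V (r *\<^sub>R x) = r * minkowski_functional V x"
proof (rule antisym)
  let ?p = "minkowski_functional V"
  have "?p (r *\<^sub>R x) / r \<le> ?p x"
  proof (rule minkowski_functional_ge[OF x])
    fix t assume t: "0 < t" "inverse t *\<^sub>R x \<in> V"
    have "inverse (r * t) * r = inverse t"
      using r by (simp add: field_simps)
    then have "inverse (r * t) *\<^sub>R (r *\<^sub>R x) \<in> V"
      using t(2) by (simp only: scaleR_scaleR)
    then have "?p (r *\<^sub>R x) \<le> r * t"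
      using r t(1) by (intro minkowski_functional_le) simp_all
    then show "?p (r *\<^sub>R x) / r \<le> t"
      using r by (simp add: field_simps)
  qed
  then show "?p (r *\<^sub>R x) \<le> r * ?p x"
    using r by (simp add: field_simps)
  show "r * ?p x \<le> ?p (r *\<^sub>R x)"
  proof (rule minkowski_functional_ge[OF rx])
    fix t assume t: "0 < t" "inverse t *\<^sub>R (r *\<^sub>R x) \<in> V"
    then have "?p x \<le> t / r"
      using r by (intro minkowski_functional_le) (simp_all add: field_simps)
    then show "r * ?p x \<le> t"
      using r by (simp add: field_simps)
  qed
qed

lemma sublinear_minkowski_functional:
  assumes "convex V" "subspace Z" "\<And>x. x \<in> Z \<Longrightarrow> \<exists>t>0. inverse t *\<^sub>R x \<in> V"
  shows "sublinear_on Z (minkowski_functional V)"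
  unfolding sublinear_on_def
proof (intro conjI ballI allI impI)
  fix x y assume "x \<in> Z" "y \<in> Z"
  then show "minkowski_functional V (x + y) \<le> minkowski_functional V x + minkowski_functional V y"
    by (intro minkowski_functional_add_le assms(1,3))
next
  fix x and r :: real assume "x \<in> Z" "0 < r"
  then show "minkowski_functional V (r *\<^sub>R x) = r * minkowski_functional V x"
    by (intro minkowski_functional_scaleR assms(3) subspace_scale[OF assms(2)])
qed

lemma (in tvs) continuous_map_linear_bounded:
  assumes U: "linear_on S U" and N: "openin T N" "0 \<in> N" and bound: "\<And>v. v \<in> N \<Longrightarrow> \<bar>U v\<bar> \<le> 1"
  shows "continuous_map T euclideanreal U"
  unfolding Met_TC.continuous_map_to_metric[unfolded mtopology_is_euclidean mball_eq_ball]
proof (intro ballI allI impI)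
  fix x0 and \<epsilon> :: real assume x0: "x0 \<in> topspace T" and \<epsilon>: "\<epsilon> > 0"
  have x0S: "x0 \<in> S" using x0 topspace by simp
  define e where "e = \<epsilon> / 2"
  have e: "e > 0" using \<epsilon> by (simp add: e_def)
  define M where "M = {y \<in> S. inverse e *\<^sub>R (y - x0) \<in> N}"
  have "continuous_map T T (\<lambda>y. inverse e *\<^sub>R (y - x0))"
    by (intro continuous_map_scaleR continuous_map_diff continuous_map_id[unfolded id_def])
      (simp_all add: topspace x0S)
  then have "openin T M"
    unfolding M_def using N(1) by (rule openin_preimage)
  moreover have "x0 \<in> M"
    using x0S N(2) by (simp add: M_def)
  moreover have "U y \<in> ball (U x0) \<epsilon>" if y: "y \<in> M" for y
  proof -
    have yS: "y \<in> S" using y by (simp add: M_def)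
    have lin: "U (inverse e *\<^sub>R (y - x0)) = inverse e * (U y - U x0)"
      using U yS x0S diff_mem scaleR_mem[of x0 "- 1"] unfolding linear_on_def
      by (metis diff_conv_add_uminus scaleR_minus1_left mult_minus1)
    have "inverse e *\<^sub>R (y - x0) \<in> N"
      using y by (simp add: M_def)
    from bound[OF this] have "\<bar>inverse e * (U y - U x0)\<bar> \<le> 1"
      by (simp only: lin)
    then have "\<bar>U y - U x0\<bar> \<le> e"
      using e by (simp add: abs_mult field_simps)
    then show ?thesis
      using e by (simp add: dist_real_def e_def abs_minus_commute)
  qed
  ultimately show "\<exists>M. openin T M \<and> x0 \<in> M \<and> (\<forall>y\<in>M. U y \<in> ball (U x0) \<epsilon>)"
    by blast
qed

section \<open>FK-spaces\<close>

lemma continuous_map_of_real_mult: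
  assumes "continuous_map X euclideanreal h"
  shows "continuous_map X euclidean (\<lambda>x. complex_of_real (h x) * k)"
proof -
  have "continuous_map euclideanreal euclidean (\<lambda>r. complex_of_real r * k)"
    by (simp add: continuous_intros)
  from continuous_map_compose[OF assms this] show ?thesis
    by (simp add: o_def)
qed

(* A complex-linear functional is recovered from its real part U as U z - i U (i z). *)
lemma complex_functional_of_real_part:
  assumes Z: "\<And>c x. x \<in> Z \<Longrightarrow> smul c x \<in> Z" and U: "linear_on Z U"
  defines "g \<equiv> \<lambda>z. complex_of_real (U z) - \<i> * complex_of_real (U (smul \<i> z))"
  shows "\<And>x y. x \<in> Z \<Longrightarrow> y \<in> Z \<Longrightarrow> g (x + y) = g x + g y"
    and "\<And>c x. x \<in> Z \<Longrightarrow> g (smul c x) = c * g x"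
proof -
  have Uadd: "U (x + y) = U x + U y" and Uscale: "U (r *\<^sub>R x) = r * U x" if "x \<in> Z" "y \<in> Z" for x y r
    using U that by (simp_all add: linear_on_def)
  fix x y assume "x \<in> Z" "y \<in> Z"
  moreover have "smul \<i> (x + y) = smul \<i> x + smul \<i> y"
    by (simp add: fun_eq_iff algebra_simps)
  ultimately show "g (x + y) = g x + g y"
    using Uadd Z by (simp add: g_def algebra_simps)
next
  have Uadd: "U (x + y) = U x + U y" and Uscale: "U (r *\<^sub>R x) = r * U x" if "x \<in> Z" "y \<in> Z" for x y r
    using U that by (simp_all add: linear_on_def)
  fix c x assume x: "x \<in> Z"
  have ix: "smul \<i> x \<in> Z"
    using Z x .
  have "smul c x = Re c *\<^sub>R x + Im c *\<^sub>R smul \<i> x"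
    by (simp add: fun_eq_iff complex_eq_iff scaleR_conv_of_real)
  then have Uc: "U (smul c x) = Re c * U x + Im c * U (smul \<i> x)"
    using Uadd Uscale x ix Z by (metis scaleR_conv_of_real smul_of_real)
  have "smul \<i> (smul c x) = Re c *\<^sub>R smul \<i> x + (- Im c) *\<^sub>R x"
    by (simp add: fun_eq_iff complex_eq_iff scaleR_conv_of_real)
  then have Uic: "U (smul \<i> (smul c x)) = Re c * U (smul \<i> x) - Im c * U x"
    using Uadd Uscale x ix Z by (metis scaleR_conv_of_real smul_of_real mult_minus_left diff_conv_add_uminus)
  show "g (smul c x) = c * g x"
    using Uc Uic by (simp add: g_def complex_eq_iff algebra_simps)
qed

lemma FK_space_tvs:
  assumes "FK_space X T"
  shows "tvs X T"
proof
  show "subspace X" "topspace T = X" "continuous_map (prod_topology T T) T (\<lambda>(x, y). x + y)"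
    using assms by (auto simp: FK_space_def subspace_def simp flip: smul_of_real)
  have smul: "continuous_map (prod_topology euclidean T) T (\<lambda>z. smul (fst z) (snd z))"
    using assms by (simp add: FK_space_def case_prod_unfold)
  have "continuous_map (prod_topology euclideanreal T) (prod_topology euclidean T)
      (\<lambda>z. (complex_of_real (fst z), snd z))"
    using continuous_map_of_real_mult[OF continuous_map_fst, where k=1]
    by (intro continuous_map_pairedI continuous_map_snd) simp
  from continuous_map_compose[OF this smul]
  show "continuous_map (prod_topology euclideanreal T) T (\<lambda>(r, x). r *\<^sub>R x)"
    by (simp add: o_def case_prod_unfold)
qed

lemma FK_space_continuous_map_coordinatewise:
  assumes "FK_space X T"
  shows "continuous_map T euclidean (\<lambda>x::cseq. x)"
proof -
  have "\<forall>j. continuous_map T euclidean (\<lambda>x::cseq. x j)"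
    using assms by (simp add: FK_space_def)
  then show ?thesis
    by (metis continuous_map_componentwise_UNIV euclidean_product_topology)
qed

lemma FK_space_convex_nbhd:
  assumes "FK_space X T" "openin T U" "0 \<in> U"
  shows "\<exists>V. openin T V \<and> 0 \<in> V \<and> V \<subseteq> U \<and> convex V"
proof -
  obtain V where V: "openin T V" "0 \<in> V" "V \<subseteq> U"
    and conv: "\<And>x y t. x \<in> V \<Longrightarrow> y \<in> V \<Longrightarrow> 0 \<le> t \<Longrightarrow> t \<le> 1 \<Longrightarrow>
       (\<lambda>j. complex_of_real t * x j + complex_of_real (1 - t) * y j) \<in> V"
    using assms unfolding FK_space_def locally_convex_at0_def by auto
  have "convex V"
    unfolding convex_alt
  proof (intro ballI allI impI)
    fix x y and t :: real assume "x \<in> V" "y \<in> V" "0 \<le> t \<and> t \<le> 1"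
    then have "(\<lambda>j. complex_of_real (1 - t) * x j + complex_of_real (1 - (1 - t)) * y j) \<in> V"
      by (intro conv) auto
    then show "(1 - t) *\<^sub>R x + t *\<^sub>R y \<in> V"
      by (simp add: fun_eq_iff scaleR_conv_of_real plus_fun_def)
  qed
  with V show ?thesis by blast
qed

theorem FK_space_inclusion_continuous:
  assumes "FK_space Y TY" "FK_space Z TZ" "Y \<subseteq> Z"
  shows "continuous_map TY TZ (\<lambda>x. x)"
proof (rule continuous_map_inclusion_tvs)
  show "tvs Y TY" "tvs Z TZ"
    using assms(1,2) by (simp_all add: FK_space_tvs)
  show "completely_metrizable_space TY" "completely_metrizable_space TZ"
    using assms(1,2) by (simp_all add: FK_space_def)
  show "continuous_map TY euclidean (\<lambda>x. x)" "continuous_map TZ euclidean (\<lambda>x. x)"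
    using assms(1,2) by (simp_all add: FK_space_continuous_map_coordinatewise)
qed (use assms(3) in simp_all)

lemma FK_space_closed_subspace_topology:
  assumes FY: "FK_space Y TY" and FZ: "FK_space Z TZ" and YZ: "Y \<subseteq> Z" and closed: "closedin TZ Y"
  shows "TY = subtopology TZ Y"
proof (rule tvs_topology_eq_if_coarser)
  show "tvs Y TY" "completely_metrizable_space TY"
    using FY FK_space_tvs by (auto simp: FK_space_def)
  show "tvs Y (subtopology TZ Y)"
    using tvs_subtopology[OF FK_space_tvs[OF FZ] tvs.subspace[OF FK_space_tvs[OF FY]] YZ] .
  show "completely_metrizable_space (subtopology TZ Y)"
    using FZ closed by (simp add: FK_space_def completely_metrizable_space_closedin)
  fix W assume "openin (subtopology TZ Y) W"
  then obtain V where V: "openin TZ V" "W = V \<inter> Y"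
    unfolding openin_subtopology by blast
  have "openin TY {x \<in> topspace TY. x \<in> V}"
    using openin_continuous_map_preimage[OF FK_space_inclusion_continuous[OF FY FZ YZ] V(1)] .
  moreover have "topspace TY = Y"
    using FY by (simp add: FK_space_def)
  ultimately show "openin TY W"
    using V(2) by (simp add: Int_def conj_commute)
qed

lemma FK_dual_convex_nbhd_bound:
  assumes FZ: "FK_space Z TZ" and Y: "0 \<in> Y" "Y \<subseteq> Z"
    and f: "continuous_map (subtopology TZ Y) euclidean f" "f 0 = 0"
  shows "\<exists>V. openin TZ V \<and> 0 \<in> V \<and> convex V \<and> (\<forall>y\<in>V \<inter> Y. cmod (f y) < 1)"
proof -
  have top: "topspace (subtopology TZ Y) = Y"
    using FZ Y(2) by (simp add: FK_space_def Int_absorb1)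
  have "openin (subtopology TZ Y) {x \<in> topspace (subtopology TZ Y). f x \<in> ball 0 1}"
    by (rule openin_continuous_map_preimage[OF f(1)]) simp
  then obtain U0 where U0: "openin TZ U0" "{x \<in> Y. f x \<in> ball 0 1} = U0 \<inter> Y"
    unfolding openin_subtopology top by blast
  have "0 \<in> {x \<in> Y. f x \<in> ball 0 1}"
    using Y(1) f(2) by simp
  then have "0 \<in> U0"
    unfolding U0(2) by simp
  then obtain V where V: "openin TZ V" "0 \<in> V" "V \<subseteq> U0" "convex V"
    using FK_space_convex_nbhd[OF FZ U0(1)] by blast
  moreover have "cmod (f y) < 1" if "y \<in> V \<inter> Y" for y
  proof -
    have "y \<in> {x \<in> Y. f x \<in> ball 0 1}"
      unfolding U0(2) using that V(3) by blast
    then show ?thesis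
      by simp
  qed
  ultimately show ?thesis
    by blast
qed

lemma (in tvs) continuous_map_dominated_by_minkowski:
  assumes U: "linear_on S U" and V: "openin T V" "0 \<in> V"
    and dominated: "\<And>x. x \<in> S \<Longrightarrow> U x \<le> minkowski_functional V x"
  shows "continuous_map T euclideanreal U"
proof (rule continuous_map_linear_bounded[OF U])
  let ?N = "{v \<in> S. v \<in> V \<and> - v \<in> V}"
  have "continuous_map T T (\<lambda>v. (- 1) *\<^sub>R v)"
    by (intro continuous_map_scaleR continuous_map_id[unfolded id_def]) simp
  then have "openin T (V \<inter> {v \<in> S. (- 1) *\<^sub>R v \<in> V})"
    using V(1) by (intro openin_Int openin_preimage)
  moreover have "V \<inter> {v \<in> S. (- 1) *\<^sub>R v \<in> V} = ?N"
    using openin_subset_carrier[OF V(1)] by auto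
  ultimately show "openin T ?N"
    by simp
  show "0 \<in> ?N"
    using V(2) by simp
  fix v assume v: "v \<in> ?N"
  then have vS: "v \<in> S" "- v \<in> S"
    using scaleR_mem[of v "- 1"] by simp_all
  then have "U v \<le> minkowski_functional V v" "U (- v) \<le> minkowski_functional V (- v)"
    using dominated by simp_all
  moreover have "minkowski_functional V v \<le> 1" "minkowski_functional V (- v) \<le> 1"
    using v minkowski_functional_le[of 1 _ V] by simp_all
  ultimately have "U v \<le> 1" "U (- v) \<le> 1"
    by linarith+
  moreover have "U ((- 1) *\<^sub>R v) = - 1 * U v"
    using U vS(1) unfolding linear_on_def by blast
  ultimately show "\<bar>U v\<bar> \<le> 1"
    by simp
qed

lemma Re_le_minkowski_functional:
  assumes Y: "subspace Y" and fsmul: "\<And>c y. y \<in> Y \<Longrightarrow> f (smul c y) = c * f y"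
    and bound: "\<forall>y\<in>V \<inter> Y. cmod (f y) < 1"
    and y: "y \<in> Y" "\<exists>t>0. inverse t *\<^sub>R y \<in> V"
  shows "Re (f y) \<le> minkowski_functional V y"
proof (rule minkowski_functional_ge[OF y(2)])
  fix t assume t: "0 < t" "inverse t *\<^sub>R y \<in> V"
  then have "cmod (f (inverse t *\<^sub>R y)) < 1"
    using bound subspace_scale[OF Y y(1)] by blast
  moreover have "f (inverse t *\<^sub>R y) = of_real (inverse t) * f y"
    using fsmul[OF y(1), of "of_real (inverse t)"] unfolding smul_of_real .
  ultimately have "inverse t * cmod (f y) < 1"
    using t(1) by (simp add: norm_mult norm_inverse)
  then have "cmod (f y) < t"
    using t(1) by (simp add: field_simps)
  then show "Re (f y) \<le> t"
    using complex_Re_le_cmod[of "f y"] by linarith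
qed

lemma FK_dual_of_real_part:
  assumes FZ: "FK_space Z TZ" and U: "linear_on Z U" "continuous_map TZ euclideanreal U"
  shows "(\<lambda>z. complex_of_real (U z) - \<i> * complex_of_real (U (smul \<i> z))) \<in> FK_dual Z TZ"
proof -
  interpret TZ: tvs Z TZ
    using FZ by (rule FK_space_tvs)
  have Zsmul: "\<And>c x. x \<in> Z \<Longrightarrow> smul c x \<in> Z"
    using FZ by (simp add: FK_space_def)
  have "continuous_map TZ TZ (smul \<i>)"
  proof -
    have "continuous_map TZ (prod_topology euclidean TZ) (\<lambda>z. (\<i>, z))"
      by (intro continuous_map_pairedI continuous_map_id[unfolded id_def]) (simp add: TZ.topspace)
    from continuous_map_compose[OF this, of TZ "\<lambda>(c, x). smul c x"] FZ
    show ?thesis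
      by (simp add: FK_space_def o_def)
  qed
  then have "continuous_map TZ euclidean (\<lambda>z. complex_of_real (U z) - \<i> * complex_of_real (U (smul \<i> z)))"
    using continuous_map_of_real_mult[OF U(2), where k=1]
      continuous_map_of_real_mult[OF continuous_map_compose[OF _ U(2)], where k="\<i>"]
    by (intro continuous_map_diff) (simp_all add: o_def mult.commute)
  then show ?thesis
    using complex_functional_of_real_part[OF Zsmul U(1)] by (simp add: FK_dual_def)
qed

theorem FK_dual_extension:
  assumes FZ: "FK_space Z TZ" and Y: "subspace Y" "\<And>c y. y \<in> Y \<Longrightarrow> smul c y \<in> Y" "Y \<subseteq> Z"
    and f: "f \<in> FK_dual Y (subtopology TZ Y)"
  shows "\<exists>g\<in>FK_dual Z TZ. \<forall>y\<in>Y. g y = f y"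
proof -
  interpret TZ: tvs Z TZ
    using FZ by (rule FK_space_tvs)
  have fadd: "\<And>x y. x \<in> Y \<Longrightarrow> y \<in> Y \<Longrightarrow> f (x + y) = f x + f y"
    and fsmul: "\<And>c x. x \<in> Y \<Longrightarrow> f (smul c x) = c * f x"
    and fcont: "continuous_map (subtopology TZ Y) euclidean f"
    using f by (auto simp: FK_dual_def)
  have Y0: "0 \<in> Y"
    using Y(1) by (rule subspace_0)
  have "f 0 = 0"
    using fsmul[OF Y0, of 0] by (simp add: smul_def zero_fun_def)
  then obtain V where V: "openin TZ V" "0 \<in> V" "convex V" "\<forall>y\<in>V \<inter> Y. cmod (f y) < 1"
    using FK_dual_convex_nbhd_bound[OF FZ Y0 Y(3) fcont] by blast
  have absorbing: "\<And>x. x \<in> Z \<Longrightarrow> \<exists>t>0. inverse t *\<^sub>R x \<in> V"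
    using TZ.absorbing_inverse[OF V(1,2)] .
  have lin: "linear_on Y (\<lambda>y. Re (f y))"
    unfolding linear_on_def
  proof (intro conjI ballI allI)
    show "Re (f (x + y)) = Re (f x) + Re (f y)" if "x \<in> Y" "y \<in> Y" for x y
      using fadd[OF that] by simp
    show "Re (f (r *\<^sub>R x)) = r * Re (f x)" if "x \<in> Y" for x r
      using fsmul[OF that, of "of_real r"] unfolding smul_of_real by simp
  qed
  have "Re (f y) \<le> minkowski_functional V y" if "y \<in> Y" for y
    using Re_le_minkowski_functional[OF Y(1) fsmul V(4) that absorbing] that Y(3) by blast
  then have dom: "\<forall>y\<in>Y. Re (f y) \<le> minkowski_functional V y"
    by blast
  obtain U where U: "linear_on Z U" "\<forall>y\<in>Y. U y = Re (f y)"
    "\<forall>x\<in>Z. U x \<le> minkowski_functional V x"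
    using Hahn_Banach_real[OF Y(1) TZ.subspace Y(3)
        sublinear_minkowski_functional[OF V(3) TZ.subspace absorbing] lin dom]
    by blast
  have "continuous_map TZ euclideanreal U"
    by (rule TZ.continuous_map_dominated_by_minkowski[OF U(1) V(1,2)]) (use U(3) in simp)
  then have "(\<lambda>z. complex_of_real (U z) - \<i> * complex_of_real (U (smul \<i> z))) \<in> FK_dual Z TZ"
    by (rule FK_dual_of_real_part[OF FZ U(1)])
  moreover have "complex_of_real (U y) - \<i> * complex_of_real (U (smul \<i> y)) = f y" if "y \<in> Y" for y
    using U(2) that Y(2) fsmul[OF that, of \<i>] by (simp add: complex_eq_iff)
  ultimately show ?thesis
    by (intro bexI[of _ "\<lambda>z. complex_of_real (U z) - \<i> * complex_of_real (U (smul \<i> z))"]) simp_all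
qed

lemma FK_dual_restrict:
  assumes "FK_space Y TY" "FK_space Z TZ" "Y \<subseteq> Z" "g \<in> FK_dual Z TZ"
  shows "g \<in> FK_dual Y TY"
proof -
  have "continuous_map TZ euclidean g"
    using assms(4) by (simp add: FK_dual_def)
  from continuous_map_compose[OF FK_space_inclusion_continuous[OF assms(1-3)] this]
  have "continuous_map TY euclidean g"
    by (simp add: o_def)
  moreover have "\<forall>x\<in>Y. \<forall>y\<in>Y. g (x + y) = g x + g y" "\<forall>c. \<forall>x\<in>Y. g (smul c x) = c * g x"
    using assms(3,4) unfolding FK_dual_def by (simp_all, blast+)
  ultimately show ?thesis
    by (simp add: FK_dual_def)
qed

lemma DW_mono:
  assumes "FK_space Y TY" "FK_space Z TZ" "Y \<subseteq> Z"
  shows "DW p q Y TY \<subseteq> DW p q Z TZ"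
  using FK_dual_restrict[OF assms] assms(3) by (auto simp: DW_def)

lemma Tdc_in_phi: "Tdc p q n x \<in> phi"
proof -
  have "{j. Tdc p q n x j \<noteq> 0} \<subseteq> {..<q n}"
  proof
    fix j assume "j \<in> {j. Tdc p q n x j \<noteq> 0}"
    then have nonzero: "Tdc p q n x j \<noteq> 0"
      by simp
    show "j \<in> {..<q n}"
    proof (rule ccontr)
      assume "j \<notin> {..<q n}"
      then have "\<forall>k\<in>{p n + 1..q n}. sect k x j = 0"
        by (auto simp: sect_def)
      then show False
        using nonzero by (simp add: Tdc_def)
    qed
  qed
  then show ?thesis
    unfolding phi_def using finite_subset by blast
qed

lemma DW_closed_subspace:
  assumes FY: "FK_space Y TY" and FZ: "FK_space Z TZ" and YZ: "Y \<subseteq> Z"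
    and closed: "closedin TZ Y" and phiY: "phi \<subseteq> Y"
  shows "DW p q Z TZ \<inter> Y \<subseteq> DW p q Y TY"
proof
  fix x assume x: "x \<in> DW p q Z TZ \<inter> Y"
  have "(\<lambda>n. f (Tdc p q n x)) \<longlonglongrightarrow> f x" if f: "f \<in> FK_dual Y TY" for f
  proof -
    have "f \<in> FK_dual Y (subtopology TZ Y)"
      using f FK_space_closed_subspace_topology[OF FY FZ YZ closed] by simp
    moreover have "subspace Y" "\<And>c y. y \<in> Y \<Longrightarrow> smul c y \<in> Y"
      using FY tvs.subspace[OF FK_space_tvs[OF FY]] by (auto simp: FK_space_def)
    ultimately obtain g where g: "g \<in> FK_dual Z TZ" "\<forall>y\<in>Y. g y = f y"
      using FK_dual_extension[OF FZ _ _ YZ] by blast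
    have "(\<lambda>n. g (Tdc p q n x)) \<longlonglongrightarrow> g x"
      using x g(1) by (simp add: DW_def)
    moreover have "g (Tdc p q n x) = f (Tdc p q n x)" for n
      using g(2) Tdc_in_phi phiY by blast
    moreover have "g x = f x"
      using g(2) x by blast
    ultimately show ?thesis
      by simp
  qed
  then show "x \<in> DW p q Y TY"
    using x by (simp add: DW_def)
qed

theorem mainTheorem3:
  fixes p q :: "nat \<Rightarrow> nat" and X Y Z :: "cseq set" and TX TY TZ :: "cseq topology"
  assumes pq: "\<And>n. p n < q n" and qinf: "filterlim q at_top sequentially"
    and FX: "FK_space X TX" and FY: "FK_space Y TY" and FZ: "FK_space Z TZ"
    and phiX: "phi \<subseteq> X" and XY: "X \<subseteq> Y" and YZ: "Y \<subseteq> Z"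
  shows "(dc_conull p q X TX Y TY \<longrightarrow> dc_conull p q X TX Z TZ) \<and>
         (dc_conull p q X TX Z TZ \<and> closedin TZ Y \<longrightarrow> dc_conull p q X TX Y TY)"
proof (intro conjI impI)
  assume "dc_conull p q X TX Y TY"
  then show "dc_conull p q X TX Z TZ"
    using XY YZ DW_mono[OF FY FZ YZ] unfolding dc_conull_def by blast
next
  assume conull: "dc_conull p q X TX Z TZ \<and> closedin TZ Y"
  have "DB p q X TX \<subseteq> Y"
    using XY by (auto simp: DB_def)
  then show "dc_conull p q X TX Y TY"
    using conull XY DW_closed_subspace[OF FY FZ YZ _ order_trans[OF phiX XY]]
    unfolding dc_conull_def by blast
qed

end
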